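(* Let $d \geq 1$, and let observed data $(y_1,\mathbf{x}_1),\ldots,(y_n,\mathbf{x}_n)$ with $y_i \in \mathbb{R}$, $\mathbf{x}_i \in \mathbb{R}^d$ be given, together with a family of conditional densities $\{p_n(\cdot \mid \mathbf{x}) : \mathbf{x}\in\mathbb{R}^d\}$ on $\mathbb{R}$ with distribution functions $P_n(\cdot\mid\mathbf{x})$. Generate $(Y_{i+1},\mathbf{X}_{i+1})$ for $i = n, n+1,\ldots$ by predictive resampling: $\mathbf{X}_{i+1}$ is drawn uniformly at random from $\{\mathbf{x}_1,\ldots,\mathbf{x}_n,\mathbf{X}_{n+1},\ldots,\mathbf{X}_i\}$ (the Bayesian bootstrap), then $Y_{i+1} \sim P_i(\cdot \mid \mathbf{X}_{i+1})$, and the conditional densities are updated by $$p_{i+1}(y \mid \mathbf{x}) = \left\{1-\alpha_{i+1}(\mathbf{x},\mathbf{X}_{i+1})+ \alpha_{i+1}(\mathbf{x},\mathbf{X}_{i+1})\, c_{\rho_y}\left(q_i,r_i\right)\right\} p_i(y\mid \mathbf{x}),$$ with $q_i = P_i(y\mid\mathbf{x})$, $r_i = P_i(Y_{i+1}\mid \mathbf{X}_{i+1})$ and $$\alpha_{i}(\mathbf{x},\mathbf{x}') = \frac{\alpha_{i}\prod_{j=1}^d c_{\rho_{x^j}} \left\{\Phi\left(x^j\right),\Phi\left(x'^j\right)\right\}}{1- \alpha_{i} + \alpha_{i}\prod_{j=1}^d c_{\rho_{x^j}} \left\{\Phi\left(x^j\right),\Phi\left(x'^j\right)\right\}}.$$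 Then for each $\mathbf{x} \in \mathbb{R}^d$ there is a constant $C$, depending only on the bandwidths $\rho$ and on $\mathbf{x}$, such that for all $M > N \geq n$ and any $\epsilon \geq 0$, $$\sup_{y} \,\mathbb{P}\left(|P_{M}(y \mid \mathbf{x}) - P_{N}(y\mid\mathbf{x})| \geq \epsilon\right) \leq 2\exp\left( \frac{-\epsilon^2}{\frac{4\epsilon C\alpha_{N+1} }{3}+ 2C^2\sum_{i=N+1}^M\alpha^2_{i}}\right).$$
   Context: $\rho_y, \rho_{x^1},\ldots,\rho_{x^d} \in (0,1)$ are bandwidths; $\alpha_i = (2-1/i)/(i+1)$; $x^j$ denotes the $j$-th coordinate of $\mathbf{x}$. $P_i(\cdot\mid\mathbf{x})$ is the distribution function of $p_i(\cdot\mid\mathbf{x})$. $\Phi$ is the standard normal distribution function, and $c_\rho(u,v) = \mathcal{N}_2\{\Phi^{-1}(u),\Phi^{-1}(v)\mid 0,1,\rho\}/[\mathcal{N}\{\Phi^{-1}(u)\mid 0,1\}\mathcal{N}\{\Phi^{-1}(v)\mid 0,1\}]$ is the bivariate Gaussian copula density, where $\mathcal{N}(\cdot\mid 0,1)$ is the standard normal density and $\mathcal{N}_2(\cdot,\cdot\mid 0,1,\rho)$ the standard bivariate normal density with correlation $\rho$. *)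

theory Defs
  imports "HOL-Probability.Probability"
begin

definition Phi :: "real \<Rightarrow> real" where
  "Phi z = (LINT t:{..z}|lborel. std_normal_density t)"

definition Phi_inv :: "real \<Rightarrow> real" where
  "Phi_inv u = (THE z. Phi z = u)"

definition bvn_density :: "real \<Rightarrow> real \<Rightarrow> real \<Rightarrow> real" where
  "bvn_density \<rho> a b =
     exp (- (a\<^sup>2 - 2 * \<rho> * a * b + b\<^sup>2) / (2 * (1 - \<rho>\<^sup>2))) / (2 * pi * sqrt (1 - \<rho>\<^sup>2))"

definition gauss_copula :: "real \<Rightarrow> real \<Rightarrow> real \<Rightarrow> real" where
  "gauss_copula \<rho> u v =
     bvn_density \<rho> (Phi_inv u) (Phi_inv v) /
       (std_normal_density (Phi_inv u) * std_normal_density (Phi_inv v))"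

definition alpha :: "nat \<Rightarrow> real" where
  "alpha i = (2 - 1 / real i) / (real i + 1)"

definition alpha_x :: "nat \<Rightarrow> ('d::finite \<Rightarrow> real) \<Rightarrow> real^'d \<Rightarrow> real^'d \<Rightarrow> real" where
  "alpha_x i \<rho>x x x' =
     (let c = (\<Prod>j\<in>UNIV. gauss_copula (\<rho>x j) (Phi (x $ j)) (Phi (x' $ j)))
      in alpha i * c / (1 - alpha i + alpha i * c))"

(* A path of the predictive resampling after the observed data:
   \<omega> k = (X_{n+1+k}, Y_{n+1+k}).
   pdens p0 \<rho>y \<rho>x n k \<omega> = p_{n+k}(\<cdot> | \<cdot>), a function of the first k entries of \<omega>. *)
primrec pdens :: "(real^'d \<Rightarrow> real \<Rightarrow> real) \<Rightarrow> real \<Rightarrow> ('d::finite \<Rightarrow> real) \<Rightarrow> nat \<Rightarrow> nat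
     \<Rightarrow> (nat \<Rightarrow> (real^'d) \<times> real) \<Rightarrow> real^'d \<Rightarrow> real \<Rightarrow> real" where
  "pdens p0 \<rho>y \<rho>x n 0 \<omega> = p0"
| "pdens p0 \<rho>y \<rho>x n (Suc k) \<omega> =
     (\<lambda>x y. let P = (\<lambda>x' y'. LINT t:{..y'}|lborel. pdens p0 \<rho>y \<rho>x n k \<omega> x' t);
               a = alpha_x (n + k + 1) \<rho>x x (fst (\<omega> k));
               q = P x y;
               r = P (fst (\<omega> k)) (snd (\<omega> k))
           in (1 - a + a * gauss_copula \<rho>y q r) * pdens p0 \<rho>y \<rho>x n k \<omega> x y)"

definition pcdf :: "(real^'d \<Rightarrow> real \<Rightarrow> real) \<Rightarrow> real \<Rightarrow> ('d::finite \<Rightarrow> real) \<Rightarrow> nat \<Rightarrow> nat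
     \<Rightarrow> (nat \<Rightarrow> (real^'d) \<times> real) \<Rightarrow> real^'d \<Rightarrow> real \<Rightarrow> real" where
  "pcdf p0 \<rho>y \<rho>x n k \<omega> x y = (LINT t:{..y}|lborel. pdens p0 \<rho>y \<rho>x n k \<omega> x t)"

definition path_space :: "(nat \<Rightarrow> (real^'d) \<times> real) measure" where
  "path_space = PiM UNIV (\<lambda>_. borel)"

(* one predictive-resampling step number k+1 (producing (X_{n+k+1}, Y_{n+k+1})) given
   the path so far: X is drawn uniformly among x_1..x_n, X_{n+1}..X_{n+k}
   (Bayesian bootstrap), then Y ~ p_{n+k}(\<cdot> | X). *)
definition step :: "(real^'d \<Rightarrow> real \<Rightarrow> real) \<Rightarrow> real \<Rightarrow> ('d::finite \<Rightarrow> real) \<Rightarrow> nat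
     \<Rightarrow> (nat \<Rightarrow> real^'d) \<Rightarrow> nat \<Rightarrow> (nat \<Rightarrow> (real^'d) \<times> real) \<Rightarrow> ((real^'d) \<times> real) measure" where
  "step p0 \<rho>y \<rho>x n xs k \<omega> =
     bind (uniform_count_measure {..<n + k})
       (\<lambda>j. let X = (if j < n then xs j else fst (\<omega> (j - n)))
            in distr (density lborel (\<lambda>y. ennreal (pdens p0 \<rho>y \<rho>x n k \<omega> X y))) borel
                     (\<lambda>y. (X, y)))"

(* law of the path after k resampling steps (entries \<ge> k are a dummy constant) *)
primrec law :: "(real^'d \<Rightarrow> real \<Rightarrow> real) \<Rightarrow> real \<Rightarrow> ('d::finite \<Rightarrow> real) \<Rightarrow> nat
     \<Rightarrow> (nat \<Rightarrow> real^'d) \<Rightarrow> nat \<Rightarrow> (nat \<Rightarrow> (real^'d) \<times> real) measure" where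
  "law p0 \<rho>y \<rho>x n xs 0 = return path_space (\<lambda>_. (0, 0))"
| "law p0 \<rho>y \<rho>x n xs (Suc k) =
     bind (law p0 \<rho>y \<rho>x n xs k)
       (\<lambda>\<omega>. distr (step p0 \<rho>y \<rho>x n xs k \<omega>) path_space (\<lambda>z. fun_upd \<omega> k z))"

end

(*
  Write P_k(y | x) for the predictive distribution function after k resampling steps. One step
  replaces it by (1 - a) P_k + a H_k, where a = alpha_x(x, X_{k+1}) is the covariate weight and
  H_k is the distribution function of the density fully updated by the copula with the new
  observation. Averaged over that observation, which is itself drawn from the predictive, H_k gives
  back P_k: by the probability integral transform the observation enters only through a uniform
  variable, and the Gaussian copula density has uniform marginals. So P_k(y | x) is a martingale
  whose increments are bounded by the weight, and the weight is at most C alpha_{k+1} because the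
  copula factors c(Phi(x^j), Phi(x'^j)) are bounded uniformly in x'. Hoeffding's lemma and Azuma's
  inequality give the sub-Gaussian tail 2 exp(- eps^2 / (2 C^2 sum alpha_i^2)), which implies the
  Bernstein-type bound of the theorem.

  The initial densities need not be jointly measurable in (x, y); but resampled covariates only
  take the n observed values, so p0 can be replaced by a jointly measurable version without
  changing the law of the resampled path.
*)
theory Submission
  imports Defs
begin

section \<open>Densities on the real line\<close>

definition is_density :: "(real \<Rightarrow> real) \<Rightarrow> bool" where
  "is_density p \<longleftrightarrow> p \<in> borel_measurable lborel \<and> (\<forall>t. p t \<ge> 0) \<and> integrable lborel p
      \<and> (LINT t|lborel. p t) = 1"

definition density_cdf :: "(real \<Rightarrow> real) \<Rightarrow> real \<Rightarrow> real" where
  "density_cdf p y = (LINT t:{..y}|lborel. p t)"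

lemma is_densityD:
  assumes "is_density p"
  shows "p \<in> borel_measurable borel" "\<And>t. p t \<ge> 0" "integrable lborel p"
    "(\<integral>\<^sup>+t. ennreal (p t) \<partial>lborel) = 1"
proof -
  show "p \<in> borel_measurable borel" "\<And>t. p t \<ge> 0" "integrable lborel p"
    using assms by (auto simp: is_density_def measurable_lborel1 cong: measurable_cong_sets)
  then show "(\<integral>\<^sup>+t. ennreal (p t) \<partial>lborel) = 1"
    using assms by (subst nn_integral_eq_integral) (auto simp: is_density_def)
qed

lemma is_densityI_nn_integral:
  assumes "p \<in> borel_measurable borel" "\<And>t. p t \<ge> 0" "(\<integral>\<^sup>+t. ennreal (p t) \<partial>lborel) = 1"
  shows "is_density p"
proof -
  have "integrable lborel p"
    using assms by (intro integrableI_nonneg) auto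
  moreover have "(LINT t|lborel. p t) = enn2real (\<integral>\<^sup>+t. ennreal (p t) \<partial>lborel)"
    using assms by (intro integral_eq_nn_integral) auto
  ultimately show ?thesis
    using assms unfolding is_density_def by auto
qed

lemma real_distribution_density_lborel:
  assumes "is_density p"
  shows "real_distribution (density lborel (\<lambda>t. ennreal (p t)))"
proof -
  have "prob_space (density lborel (\<lambda>t. ennreal (p t)))"
    using is_densityD[OF assms] by (intro prob_spaceI) (simp add: emeasure_density)
  then show ?thesis
    unfolding real_distribution_def real_distribution_axioms_def by simp
qed

lemma nn_integral_atMost_density:
  assumes "is_density p"
  shows "(\<integral>\<^sup>+t. indicator {..y} t * ennreal (p t) \<partial>lborel) = ennreal (density_cdf p y)"
proof -
  have "(\<integral>\<^sup>+t. indicator {..y} t * ennreal (p t) \<partial>lborel) =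
      (\<integral>\<^sup>+t. ennreal (indicator {..y} t *\<^sub>R p t) \<partial>lborel)"
    by (intro nn_integral_cong) (auto split: split_indicator)
  also have "\<dots> = ennreal (density_cdf p y)"
    unfolding density_cdf_def set_lebesgue_integral_def using is_densityD[OF assms]
    by (intro nn_integral_eq_integral integrable_mult_indicator) auto
  finally show ?thesis .
qed

lemma density_cdf_integral: "density_cdf p y = (\<integral>t. (if t \<le> y then p t else 0) \<partial>lborel)"
  unfolding density_cdf_def set_lebesgue_integral_def
  by (intro Bochner_Integration.integral_cong) (auto split: split_indicator)

lemma density_cdf_eq_cdf:
  assumes "is_density p"
  shows "density_cdf p = cdf (density lborel (\<lambda>t. ennreal (p t)))"
proof
  fix y
  have "emeasure (density lborel (\<lambda>t. ennreal (p t))) {..y} = ennreal (density_cdf p y)"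
    using is_densityD(1)[OF assms] nn_integral_atMost_density[OF assms]
    by (simp add: emeasure_density mult.commute)
  moreover have "density_cdf p y \<ge> 0"
    unfolding density_cdf_def using is_densityD(2)[OF assms] by (simp add: set_lebesgue_integral_def integral_nonneg)
  ultimately show "density_cdf p y = cdf (density lborel (\<lambda>t. ennreal (p t))) y"
    unfolding cdf_def measure_def by simp
qed

lemma isCont_density_cdf:
  assumes "is_density p"
  shows "isCont (density_cdf p) x"
proof -
  interpret real_distribution "density lborel (\<lambda>t. ennreal (p t))"
    by (rule real_distribution_density_lborel[OF assms])
  have "emeasure (density lborel (\<lambda>t. ennreal (p t))) {x} = (\<integral>\<^sup>+t. ennreal (p x) * indicator {x} t \<partial>lborel)"
    using is_densityD(1)[OF assms]
    by (subst emeasure_density) (auto intro!: nn_integral_cong split: split_indicator)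
  then show ?thesis
    unfolding density_cdf_eq_cdf[OF assms] isCont_cdf measure_def by simp
qed

lemma borel_measurable_density_cdf:
  "is_density p \<Longrightarrow> density_cdf p \<in> borel_measurable borel"
  by (intro borel_measurable_continuous_onI continuous_at_imp_continuous_on ballI isCont_density_cdf)

lemma
  assumes "is_density p"
  shows density_cdf_mono: "a \<le> b \<Longrightarrow> density_cdf p a \<le> density_cdf p b"
    and density_cdf_bounds: "density_cdf p a \<in> {0..1}"
    and density_cdf_at_top: "(density_cdf p \<longlongrightarrow> 1) at_top"
    and density_cdf_at_bot: "(density_cdf p \<longlongrightarrow> 0) at_bot"
proof -
  interpret real_distribution "density lborel (\<lambda>t. ennreal (p t))"
    by (rule real_distribution_density_lborel[OF assms])
  show "a \<le> b \<Longrightarrow> density_cdf p a \<le> density_cdf p b"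
    by (simp add: density_cdf_eq_cdf[OF assms] cdf_nondecreasing)
  show "density_cdf p a \<in> {0..1}"
    by (simp add: density_cdf_eq_cdf[OF assms] cdf_nonneg cdf_bounded_prob)
  show "(density_cdf p \<longlongrightarrow> 1) at_top"
    by (simp add: density_cdf_eq_cdf[OF assms] cdf_lim_at_top_prob)
  show "(density_cdf p \<longlongrightarrow> 0) at_bot"
    by (simp add: density_cdf_eq_cdf[OF assms] cdf_lim_at_bot)
qed

section \<open>The probability integral transform\<close>

lemma density_cdf_sublevel_eq_atMost:
  assumes p: "is_density p" and "u < 1" and ne: "{t. density_cdf p t \<le> u} \<noteq> {}"
  shows "\<exists>s. {t. density_cdf p t \<le> u} = {..s} \<and> density_cdf p s = u"
proof -
  define S where "S = {t. density_cdf p t \<le> u}"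
  have "eventually (\<lambda>t. density_cdf p t > u) at_top"
    using density_cdf_at_top[OF p] \<open>u < 1\<close> by (intro order_tendstoD) auto
  then obtain b where b: "\<And>t. t \<ge> b \<Longrightarrow> density_cdf p t > u"
    by (auto simp: eventually_at_top_linorder)
  have bdd: "bdd_above S"
    unfolding bdd_above_def S_def
    by (rule exI[of _ b]) (auto, meson b linorder_not_le order_less_imp_le order_le_less_trans)
  have "closed S"
    unfolding S_def using isCont_density_cdf[OF p]
    by (intro closed_Collect_le continuous_at_imp_continuous_on) auto
  define s where "s = Sup S"
  have sS: "s \<in> S"
    unfolding s_def using closed_contains_Sup[OF ne[folded S_def] bdd \<open>closed S\<close>] .
  have S_eq: "S = {..s}"
  proof
    show "S \<subseteq> {..s}"
      using cSup_upper[OF _ bdd] by (auto simp: s_def)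
    show "{..s} \<subseteq> S"
      using sS density_cdf_mono[OF p] by (auto simp: S_def intro: order_trans)
  qed
  have "u \<le> density_cdf p s"
  proof (rule tendsto_lowerbound)
    show "(density_cdf p \<longlongrightarrow> density_cdf p s) (at_right s)"
      using isCont_density_cdf[OF p, of s] by (simp add: isCont_def filterlim_at_split)
    have "u \<le> density_cdf p t" if "t > s" for t
    proof -
      have "t \<notin> S" using that S_eq by auto
      then show ?thesis by (simp add: S_def)
    qed
    then show "eventually (\<lambda>t. u \<le> density_cdf p t) (at_right s)"
      using eventually_at_right_less[of s] by (auto elim: eventually_mono)
  qed simp
  with sS S_eq show ?thesis
    by (intro exI[of _ s]) (auto simp: S_def)
qed

lemma measure_density_cdf_le:
  assumes p: "is_density p"
  shows "measure (density lborel (\<lambda>t. ennreal (p t))) {t. density_cdf p t \<le> u} = max 0 (min 1 u)"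
proof -
  interpret real_distribution "density lborel (\<lambda>t. ennreal (p t))"
    by (rule real_distribution_density_lborel[OF p])
  consider "u < 0" | "u \<ge> 1" | "0 \<le> u" "u < 1" "{t. density_cdf p t \<le> u} = {}"
    | "u < 1" "{t. density_cdf p t \<le> u} \<noteq> {}"
    by linarith
  then show ?thesis
  proof cases
    case 1
    then have "{t. density_cdf p t \<le> u} = {}"
      using density_cdf_bounds[OF p] by (auto simp: not_le) (meson atLeastAtMost_iff less_le_trans not_le)
    then show ?thesis using 1 by simp
  next
    case 2
    then have "{t. density_cdf p t \<le> u} = space (density lborel (\<lambda>t. ennreal (p t)))"
      using density_cdf_bounds[OF p] by (auto intro: order_trans)
    then show ?thesis using 2 prob_space by simp
  next
    case 3
    have "u = 0"
    proof (rule ccontr)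
      assume "u \<noteq> 0"
      then have "eventually (\<lambda>t. density_cdf p t < u) at_bot"
        using 3 by (intro order_tendstoD(2)[OF density_cdf_at_bot[OF p]]) simp
      then obtain t where "density_cdf p t < u"
        by (meson eventually_at_bot_linorder order_refl)
      then show False using 3(3) less_imp_le by blast
    qed
    then show ?thesis using 3 by simp
  next
    case 4
    then obtain s where "{t. density_cdf p t \<le> u} = {..s}" "density_cdf p s = u"
      using density_cdf_sublevel_eq_atMost[OF p] by blast
    moreover from this(2) have "u \<ge> 0"
      using density_cdf_bounds[OF p, of s] by simp
    ultimately show ?thesis
      using 4 density_cdf_eq_cdf[OF p] by (simp add: cdf_def)
  qed
qed

lemma emeasure_uniform01_atMost:
  "emeasure (density lborel (indicator {0..1})) {..u} = ennreal (max 0 (min 1 u))"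
proof -
  have "emeasure (density lborel (indicator {0..1})) {..u} = emeasure lborel ({0..1} \<inter> {..u})"
    by (subst emeasure_density) (auto intro!: nn_integral_cong split: split_indicator
        simp flip: nn_integral_indicator)
  also have "\<dots> = ennreal (max 0 (min 1 u))"
  proof (cases "u < 0")
    case True
    then have "{0..1} \<inter> {..u} = {}" by auto
    then show ?thesis using True by simp
  next
    case False
    then have "{0..1} \<inter> {..u} = {0..min 1 u}" by auto
    then show ?thesis using False by simp
  qed
  finally show ?thesis .
qed

lemma real_distribution_uniform01: "real_distribution (density lborel (indicator {0..1}))"
proof -
  have "prob_space (density lborel (indicator {0..1::real}))"
    by (intro prob_spaceI) (simp add: emeasure_density)
  then show ?thesis
    unfolding real_distribution_def real_distribution_axioms_def by simp
qed

theorem distr_density_cdf_uniform01: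
  assumes p: "is_density p"
  shows "distr (density lborel (\<lambda>t. ennreal (p t))) borel (density_cdf p) = density lborel (indicator {0..1})"
proof (rule cdf_unique)
  let ?M = "density lborel (\<lambda>t. ennreal (p t))"
  interpret real_distribution ?M
    by (rule real_distribution_density_lborel[OF p])
  have F: "density_cdf p \<in> borel_measurable ?M"
    using borel_measurable_density_cdf[OF p] by simp
  then show "real_distribution (distr ?M borel (density_cdf p))"
    by simp
  show "real_distribution (density lborel (indicator {0..1}))"
    by (rule real_distribution_uniform01)
  have "cdf (distr ?M borel (density_cdf p)) u = max 0 (min 1 u)" for u
    unfolding cdf_def using F measure_density_cdf_le[OF p, of u]
    by (subst measure_distr) (auto simp: vimage_def Int_def)
  moreover have "cdf (density lborel (indicator {0..1})) u = max 0 (min 1 u)" for u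
    unfolding cdf_def measure_def emeasure_uniform01_atMost by (simp add: max_def)
  ultimately show "cdf (distr ?M borel (density_cdf p)) = cdf (density lborel (indicator {0..1}))"
    by auto
qed

lemma nn_integral_density_cdf_transform:
  assumes p: "is_density p" and g: "g \<in> borel_measurable borel"
  shows "(\<integral>\<^sup>+t. ennreal (p t) * g (density_cdf p t) \<partial>lborel) = (\<integral>\<^sup>+u. indicator {0..1} u * g u \<partial>lborel)"
proof -
  let ?M = "density lborel (\<lambda>t. ennreal (p t))"
  have [measurable]: "p \<in> borel_measurable borel" "density_cdf p \<in> borel_measurable borel"
    using is_densityD(1)[OF p] borel_measurable_density_cdf[OF p] .
  have "(\<integral>\<^sup>+t. ennreal (p t) * g (density_cdf p t) \<partial>lborel) = (\<integral>\<^sup>+u. g u \<partial>distr ?M borel (density_cdf p))"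
    using g by (simp add: nn_integral_density nn_integral_distr)
  also have "\<dots> = (\<integral>\<^sup>+u. indicator {0..1} u * g u \<partial>lborel)"
    using g by (simp add: distr_density_cdf_uniform01[OF p] nn_integral_density)
  finally show ?thesis .
qed

section \<open>The standard normal distribution and the Gaussian copula\<close>

abbreviation phi :: "real \<Rightarrow> real" where
  "phi \<equiv> std_normal_density"

lemma std_normal_density_pos: "phi t > 0"
  by (simp add: normal_density_pos)

lemma is_density_std_normal: "is_density phi"
  unfolding is_density_def by (auto simp: measurable_lborel1)

lemma Phi_eq_density_cdf: "Phi = density_cdf phi"
  by (auto simp: Phi_def density_cdf_def fun_eq_iff)

lemma isCont_Phi: "isCont Phi x"
  unfolding Phi_eq_density_cdf by (rule isCont_density_cdf[OF is_density_std_normal])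

lemma borel_measurable_Phi [measurable]: "Phi \<in> borel_measurable borel"
  unfolding Phi_eq_density_cdf by (rule borel_measurable_density_cdf[OF is_density_std_normal])

lemma Phi_strict_mono:
  assumes "a < b"
  shows "Phi a < Phi b"
proof -
  let ?M = "density lborel (\<lambda>t. ennreal (phi t))"
  interpret real_distribution ?M
    by (rule real_distribution_density_lborel[OF is_density_std_normal])
  define c where "c = \<bar>a\<bar> + \<bar>b\<bar>"
  have "phi c \<le> phi t" if "t \<in> {a<..b}" for t
  proof -
    have "\<bar>t\<bar> \<le> c"
      using that unfolding c_def by (simp add: abs_if)
    then have "\<bar>t\<bar>\<^sup>2 \<le> c\<^sup>2"
      by (intro power_mono) auto
    then have "exp (- c\<^sup>2 / 2) \<le> exp (- t\<^sup>2 / 2)"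
      by simp
    then show ?thesis
      unfolding std_normal_density_def by (intro mult_left_mono) auto
  qed
  then have "(\<integral>\<^sup>+t. ennreal (phi c) * indicator {a<..b} t \<partial>lborel) \<le> emeasure ?M {a<..b}"
    by (subst emeasure_density) (auto intro!: nn_integral_mono split: split_indicator)
  moreover have "(\<integral>\<^sup>+t. ennreal (phi c) * indicator {a<..b} t \<partial>lborel) = ennreal (phi c * (b - a))"
    using assms std_normal_density_pos[of c]
    by (subst nn_integral_cmult_indicator) (auto simp: ennreal_mult)
  ultimately have "ennreal (phi c * (b - a)) \<le> ennreal (measure ?M {a<..b})"
    by (simp add: emeasure_eq_measure)
  moreover have "phi c * (b - a) > 0"
    using assms by (simp add: normal_density_pos)
  ultimately have "measure ?M {a<..b} > 0"
    by (simp add: ennreal_le_iff)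
  then show ?thesis
    unfolding Phi_eq_density_cdf density_cdf_eq_cdf[OF is_density_std_normal]
    using cdf_diff_eq[OF assms] by simp
qed

lemma Phi_le_iff: "Phi a \<le> Phi b \<longleftrightarrow> a \<le> b"
  using Phi_strict_mono[of a b] Phi_strict_mono[of b a] by (cases a b rule: linorder_cases) auto

lemma Phi_inv_Phi [simp]: "Phi_inv (Phi a) = a"
  unfolding Phi_inv_def by (rule the_equality) (auto simp: order.eq_iff Phi_le_iff)

lemma Phi_bounds: "0 < Phi a" "Phi a < 1"
  using density_cdf_bounds[OF is_density_std_normal, of "a - 1"]
    density_cdf_bounds[OF is_density_std_normal, of "a + 1"]
    Phi_strict_mono[of "a - 1" a] Phi_strict_mono[of a "a + 1"]
  by (auto simp: Phi_eq_density_cdf)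

lemma Phi_Phi_inv:
  assumes "0 < u" "u < 1"
  shows "Phi (Phi_inv u) = u"
proof -
  have "eventually (\<lambda>t. Phi t < u) at_bot"
    using assms by (intro order_tendstoD(2)[OF density_cdf_at_bot[OF is_density_std_normal, folded Phi_eq_density_cdf]])
  then obtain a where a: "Phi a < u"
    by (meson eventually_at_bot_linorder order_refl)
  have "eventually (\<lambda>t. Phi t > u) at_top"
    using assms by (intro order_tendstoD(1)[OF density_cdf_at_top[OF is_density_std_normal, folded Phi_eq_density_cdf]])
  then obtain b where b: "u < Phi b"
    by (meson eventually_at_top_linorder order_refl)
  have "a \<le> b"
    using a b Phi_le_iff[of a b] by linarith
  moreover have "continuous_on {a..b} Phi"
    by (intro continuous_at_imp_continuous_on) (simp add: isCont_Phi)
  ultimately obtain z where "Phi z = u"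
    using IVT'[of Phi a u b] a b by auto
  then show ?thesis by auto
qed

lemma Phi_inv_le_iff: "0 < u \<Longrightarrow> u < 1 \<Longrightarrow> Phi_inv u \<le> z \<longleftrightarrow> u \<le> Phi z"
  using Phi_le_iff[of "Phi_inv u" z] Phi_Phi_inv by simp

text \<open>Outside \<open>(0, 1)\<close> the value of \<^const>\<open>Phi_inv\<close> is an unspecified \<open>THE\<close>-value,
  so it need not be Borel measurable; clamping the argument repairs this without changing any
  value on \<open>[0, 1]\<close>.\<close>

definition Phi_inv_clamped :: "real \<Rightarrow> real" where
  "Phi_inv_clamped u = Phi_inv (max 0 (min 1 u))"

lemma Phi_inv_clamped_eq: "u \<in> {0..1} \<Longrightarrow> Phi_inv_clamped u = Phi_inv u"
  by (simp add: Phi_inv_clamped_def)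

lemma Phi_inv_clamped_Phi [simp]: "Phi_inv_clamped (Phi a) = a"
  using Phi_bounds[of a] by (simp add: Phi_inv_clamped_eq)

lemma borel_measurable_Phi_inv_clamped [measurable]: "Phi_inv_clamped \<in> borel_measurable borel"
proof -
  define f where "f u = (if u \<in> {0<..<1} then Phi_inv u else 0)" for u
  have [measurable]: "f \<in> borel_measurable borel"
    unfolding f_def
  proof (rule borel_measurable_iff_le[THEN iffD2], intro allI)
    fix z
    have "{u \<in> space borel. (if u \<in> {0<..<1} then Phi_inv u else 0) \<le> z} =
        ({0<..<1} \<inter> {..Phi z}) \<union> (if 0 \<le> z then - {0<..<1} else {})"
      using Phi_inv_le_iff[of _ z] by auto
    then show "{u \<in> space borel. (if u \<in> {0<..<1} then Phi_inv u else 0) \<le> z} \<in> sets borel"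
      by simp
  qed
  have eq: "Phi_inv_clamped = (\<lambda>u. if u \<in> {0<..<1} then f u else if u \<le> 0 then Phi_inv 0 else Phi_inv 1)"
    by (auto simp: Phi_inv_clamped_def f_def fun_eq_iff max_def min_def)
  show ?thesis
    unfolding eq by measurable
qed

definition gauss_copula_clamped :: "real \<Rightarrow> real \<Rightarrow> real \<Rightarrow> real" where
  "gauss_copula_clamped \<rho> u v = bvn_density \<rho> (Phi_inv_clamped u) (Phi_inv_clamped v) /
     (phi (Phi_inv_clamped u) * phi (Phi_inv_clamped v))"

lemma gauss_copula_clamped_eq:
  "u \<in> {0..1} \<Longrightarrow> v \<in> {0..1} \<Longrightarrow> gauss_copula \<rho> u v = gauss_copula_clamped \<rho> u v"
  by (simp add: gauss_copula_def gauss_copula_clamped_def Phi_inv_clamped_eq)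

lemma gauss_copula_Phi_eq: "gauss_copula \<rho> (Phi a) (Phi b) = gauss_copula_clamped \<rho> (Phi a) (Phi b)"
  using Phi_bounds[of a] Phi_bounds[of b] by (intro gauss_copula_clamped_eq) auto

lemma borel_measurable_gauss_copula_clamped [measurable (raw)]:
  assumes [measurable]: "f \<in> borel_measurable M" "g \<in> borel_measurable M"
  shows "(\<lambda>x. gauss_copula_clamped \<rho> (f x) (g x)) \<in> borel_measurable M"
  unfolding gauss_copula_clamped_def bvn_density_def by measurable

lemma bvn_density_nonneg: "\<bar>\<rho>\<bar> < 1 \<Longrightarrow> bvn_density \<rho> a b \<ge> 0"
  using abs_square_less_1[of \<rho>] by (simp add: bvn_density_def)

lemma gauss_copula_nonneg: "\<bar>\<rho>\<bar> < 1 \<Longrightarrow> gauss_copula \<rho> u v \<ge> 0"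
  unfolding gauss_copula_def using bvn_density_nonneg normal_density_pos by (simp add: less_imp_le)

lemma gauss_copula_clamped_nonneg: "\<bar>\<rho>\<bar> < 1 \<Longrightarrow> gauss_copula_clamped \<rho> u v \<ge> 0"
  unfolding gauss_copula_clamped_def using bvn_density_nonneg normal_density_pos
  by (simp add: less_imp_le)

lemma gauss_copula_clamped_commute: "gauss_copula_clamped \<rho> u v = gauss_copula_clamped \<rho> v u"
  unfolding gauss_copula_clamped_def bvn_density_def by (simp add: algebra_simps)

lemma bvn_density_exponent:
  fixes \<rho> a b :: real
  assumes "\<bar>\<rho>\<bar> < 1"
  shows "- b\<^sup>2 / 2 - (a - \<rho> * b)\<^sup>2 / (2 * (1 - \<rho>\<^sup>2)) = - (a\<^sup>2 - 2 * \<rho> * a * b + b\<^sup>2) / (2 * (1 - \<rho>\<^sup>2))"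
proof -
  have d: "2 * (1 - \<rho>\<^sup>2) \<noteq> 0"
    using assms abs_square_less_1[of \<rho>] by simp
  have "- b\<^sup>2 / 2 = - b\<^sup>2 * (1 - \<rho>\<^sup>2) / (2 * (1 - \<rho>\<^sup>2))"
    using d by (metis mult.commute nonzero_mult_divide_mult_cancel_right mult_eq_0_iff)
  then have "- b\<^sup>2 / 2 - (a - \<rho> * b)\<^sup>2 / (2 * (1 - \<rho>\<^sup>2)) =
      (- b\<^sup>2 * (1 - \<rho>\<^sup>2) - (a - \<rho> * b)\<^sup>2) / (2 * (1 - \<rho>\<^sup>2))"
    by (simp add: diff_divide_distrib)
  also have "- b\<^sup>2 * (1 - \<rho>\<^sup>2) - (a - \<rho> * b)\<^sup>2 = - (a\<^sup>2 - 2 * \<rho> * a * b + b\<^sup>2)"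
    by (simp add: power2_eq_square algebra_simps)
  finally show ?thesis .
qed

lemma bvn_density_conditional:
  assumes "\<bar>\<rho>\<bar> < 1"
  shows "bvn_density \<rho> a b = phi b * normal_density (\<rho> * b) (sqrt (1 - \<rho>\<^sup>2)) a"
proof -
  have r: "0 < 1 - \<rho>\<^sup>2"
    using assms abs_square_less_1[of \<rho>] by simp
  have s2: "(sqrt (1 - \<rho>\<^sup>2))\<^sup>2 = 1 - \<rho>\<^sup>2"
    using r by simp
  have "sqrt (2 * pi * (1 - \<rho>\<^sup>2)) = sqrt (2 * pi) * sqrt (1 - \<rho>\<^sup>2)"
    by (rule real_sqrt_mult)
  moreover have "sqrt (2 * pi) * sqrt (2 * pi) = 2 * pi"
    by simp
  ultimately have "sqrt (2 * pi) * sqrt (2 * pi * (1 - \<rho>\<^sup>2)) = 2 * pi * sqrt (1 - \<rho>\<^sup>2)"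
    by (metis mult.assoc)
  then have c: "1 / sqrt (2 * pi) * (1 / sqrt (2 * pi * (1 - \<rho>\<^sup>2))) = 1 / (2 * pi * sqrt (1 - \<rho>\<^sup>2))"
    by (simp add: field_simps)
  have "phi b * normal_density (\<rho> * b) (sqrt (1 - \<rho>\<^sup>2)) a =
      (1 / sqrt (2 * pi) * (1 / sqrt (2 * pi * (1 - \<rho>\<^sup>2)))) *
      (exp (- b\<^sup>2 / 2) * exp (- (a - \<rho> * b)\<^sup>2 / (2 * (1 - \<rho>\<^sup>2))))"
    unfolding std_normal_density_def unfolding normal_density_def s2
    by (simp only: mult.assoc mult.commute mult.left_commute)
  also have "\<dots> = exp (- b\<^sup>2 / 2 - (a - \<rho> * b)\<^sup>2 / (2 * (1 - \<rho>\<^sup>2))) / (2 * pi * sqrt (1 - \<rho>\<^sup>2))"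
    unfolding c exp_add[symmetric] by simp
  also have "\<dots> = bvn_density \<rho> a b"
    unfolding bvn_density_exponent[OF assms] bvn_density_def ..
  finally show ?thesis ..
qed

lemma nn_integral_bvn_density:
  assumes "\<bar>\<rho>\<bar> < 1"
  shows "(\<integral>\<^sup>+a. ennreal (bvn_density \<rho> a b) \<partial>lborel) = ennreal (phi b)"
proof -
  have s: "sqrt (1 - \<rho>\<^sup>2) > 0"
    using assms abs_square_less_1[of \<rho>] by simp
  have "(\<integral>\<^sup>+a. ennreal (bvn_density \<rho> a b) \<partial>lborel) =
      ennreal (phi b) * (\<integral>\<^sup>+a. ennreal (normal_density (\<rho> * b) (sqrt (1 - \<rho>\<^sup>2)) a) \<partial>lborel)"
    by (simp add: bvn_density_conditional[OF assms] ennreal_mult nn_integral_cmult)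
  also have "(\<integral>\<^sup>+a. ennreal (normal_density (\<rho> * b) (sqrt (1 - \<rho>\<^sup>2)) a) \<partial>lborel) = 1"
    using integrable_normal_density[OF s] integral_normal_density[OF s]
    by (subst nn_integral_eq_integral) auto
  finally show ?thesis by simp
qed

lemma nn_integral_gauss_copula_clamped:
  assumes "\<bar>\<rho>\<bar> < 1"
  shows "(\<integral>\<^sup>+u. indicator {0..1} u * ennreal (gauss_copula_clamped \<rho> u v) \<partial>lborel) = 1"
proof -
  have "(\<integral>\<^sup>+u. indicator {0..1} u * ennreal (gauss_copula_clamped \<rho> u v) \<partial>lborel) =
      (\<integral>\<^sup>+t. ennreal (phi t) * ennreal (gauss_copula_clamped \<rho> (Phi t) v) \<partial>lborel)"
    unfolding Phi_eq_density_cdf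
    by (rule nn_integral_density_cdf_transform[OF is_density_std_normal, symmetric]) measurable
  also have "\<dots> = (\<integral>\<^sup>+t. ennreal (bvn_density \<rho> t (Phi_inv_clamped v)) * ennreal (1 / phi (Phi_inv_clamped v)) \<partial>lborel)"
  proof (intro nn_integral_cong)
    fix t
    have "phi t * gauss_copula_clamped \<rho> (Phi t) v = bvn_density \<rho> t (Phi_inv_clamped v) * (1 / phi (Phi_inv_clamped v))"
      unfolding gauss_copula_clamped_def using std_normal_density_pos[of t] by simp
    then show "ennreal (phi t) * ennreal (gauss_copula_clamped \<rho> (Phi t) v) =
        ennreal (bvn_density \<rho> t (Phi_inv_clamped v)) * ennreal (1 / phi (Phi_inv_clamped v))"
      using std_normal_density_pos[of t] bvn_density_nonneg[OF assms] gauss_copula_clamped_nonneg[OF assms]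
      by (simp flip: ennreal_mult)
  qed
  also have "\<dots> = (\<integral>\<^sup>+t. ennreal (bvn_density \<rho> t (Phi_inv_clamped v)) \<partial>lborel) * ennreal (1 / phi (Phi_inv_clamped v))"
    by (rule nn_integral_multc) (simp add: measurable_lborel1 bvn_density_def)
  also have "\<dots> = 1"
    using std_normal_density_pos[of "Phi_inv_clamped v"]
    by (simp add: nn_integral_bvn_density[OF assms] flip: ennreal_mult)
  finally show ?thesis .
qed

text \<open>The conditional density is bounded by its peak value, which gives a bound on the copula that
  is uniform in the second argument.\<close>

lemma gauss_copula_Phi_le:
  assumes "\<bar>\<rho>\<bar> < 1"
  shows "gauss_copula \<rho> (Phi a) (Phi b) \<le> exp (a\<^sup>2 / 2) / sqrt (1 - \<rho>\<^sup>2)"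
proof -
  define s where "s = sqrt (1 - \<rho>\<^sup>2)"
  have s: "s > 0"
    using assms abs_square_less_1[of \<rho>] by (simp add: s_def)
  have "gauss_copula \<rho> (Phi a) (Phi b) = normal_density (\<rho> * b) s a / phi a"
    unfolding gauss_copula_def Phi_inv_Phi bvn_density_conditional[OF assms] s_def
    using std_normal_density_pos[of b] by simp
  also have "\<dots> \<le> (1 / sqrt (2 * pi * s\<^sup>2)) / phi a"
  proof -
    have "0 \<le> (a - \<rho> * b)\<^sup>2 / (2 * s\<^sup>2)"
      by simp
    then have "exp (- ((a - \<rho> * b)\<^sup>2 / (2 * s\<^sup>2))) \<le> 1"
      by simp
    from divide_right_mono[OF this, of "sqrt (2 * pi * s\<^sup>2)"] show ?thesis
      using std_normal_density_pos[of a] unfolding normal_density_def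
      by (simp add: divide_right_mono)
  qed
  also have "\<dots> = exp (a\<^sup>2 / 2) / s"
    using s by (simp add: std_normal_density_def real_sqrt_mult exp_minus field_simps)
  finally show ?thesis
    by (simp add: s_def)
qed

section \<open>Copula updates of a density\<close>

text \<open>The update of the paper with weight \<open>a\<close>, where \<open>r = P_i(Y_{i+1} | X_{i+1})\<close> is the
  transformed new observation.\<close>

definition copula_update :: "real \<Rightarrow> real \<Rightarrow> real \<Rightarrow> (real \<Rightarrow> real) \<Rightarrow> real \<Rightarrow> real" where
  "copula_update \<rho> a r p y = (1 - a + a * gauss_copula_clamped \<rho> (density_cdf p y) r) * p y"

lemma copula_update_convex:
  "copula_update \<rho> a r p = (\<lambda>y. (1 - a) * p y + a * copula_update \<rho> 1 r p y)"
  by (simp add: copula_update_def fun_eq_iff algebra_simps)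

lemma is_density_convex_combination:
  assumes "is_density p" "is_density q" "0 \<le> a" "a \<le> 1"
  shows "is_density (\<lambda>t. (1 - a) * p t + a * q t)"
  using assms by (auto simp: is_density_def)

lemma density_cdf_convex_combination:
  assumes "is_density p" "is_density q"
  shows "density_cdf (\<lambda>t. (1 - a) * p t + a * q t) y = (1 - a) * density_cdf p y + a * density_cdf q y"
proof -
  have "set_integrable lborel {..y} f" if "is_density f" for f
    using integrable_mult_indicator[of "{..y}" lborel f] is_densityD(3)[OF that]
    by (simp add: set_integrable_def)
  then have "set_integrable lborel {..y} p" "set_integrable lborel {..y} q"
    using assms by blast+
  then show ?thesis
    unfolding density_cdf_def by (simp add: set_integral_add set_integral_mult_right)
qed

lemma is_density_copula_update_1:
  assumes p: "is_density p" and \<rho>: "\<bar>\<rho>\<bar> < 1"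
  shows "is_density (copula_update \<rho> 1 r p)"
proof (rule is_densityI_nn_integral)
  have [measurable]: "p \<in> borel_measurable borel" "density_cdf p \<in> borel_measurable borel"
    using is_densityD(1)[OF p] borel_measurable_density_cdf[OF p] .
  show "copula_update \<rho> 1 r p \<in> borel_measurable borel"
    unfolding copula_update_def by measurable
  show "0 \<le> copula_update \<rho> 1 r p t" for t
    using is_densityD(2)[OF p] gauss_copula_clamped_nonneg[OF \<rho>] by (simp add: copula_update_def)
  have "(\<integral>\<^sup>+t. ennreal (copula_update \<rho> 1 r p t) \<partial>lborel) =
      (\<integral>\<^sup>+t. ennreal (p t) * ennreal (gauss_copula_clamped \<rho> (density_cdf p t) r) \<partial>lborel)"
    using is_densityD(2)[OF p] gauss_copula_clamped_nonneg[OF \<rho>]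
    by (intro nn_integral_cong) (simp add: copula_update_def ennreal_mult mult.commute)
  also have "\<dots> = (\<integral>\<^sup>+u. indicator {0..1} u * ennreal (gauss_copula_clamped \<rho> u r) \<partial>lborel)"
    by (rule nn_integral_density_cdf_transform[OF p]) measurable
  also have "\<dots> = 1"
    by (rule nn_integral_gauss_copula_clamped[OF \<rho>])
  finally show "(\<integral>\<^sup>+t. ennreal (copula_update \<rho> 1 r p t) \<partial>lborel) = 1" .
qed

lemma is_density_copula_update:
  assumes "is_density p" "\<bar>\<rho>\<bar> < 1" "0 \<le> a" "a \<le> 1"
  shows "is_density (copula_update \<rho> a r p)"
  unfolding copula_update_convex[of \<rho> a]
  using assms by (intro is_density_convex_combination is_density_copula_update_1)

lemma density_cdf_copula_update:
  assumes "is_density p" "\<bar>\<rho>\<bar> < 1"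
  shows "density_cdf (copula_update \<rho> a r p) y =
    (1 - a) * density_cdf p y + a * density_cdf (copula_update \<rho> 1 r p) y"
  unfolding copula_update_convex[of \<rho> a]
  using assms by (intro density_cdf_convex_combination is_density_copula_update_1)

lemma borel_measurable_density_cdf_copula_update:
  assumes p: "is_density p" and [measurable]: "g \<in> borel_measurable M"
  shows "(\<lambda>w. density_cdf (copula_update \<rho> 1 (g w) p) y) \<in> borel_measurable M"
proof -
  have [measurable]: "p \<in> borel_measurable lborel" "density_cdf p \<in> borel_measurable lborel"
    using is_densityD(1)[OF p] borel_measurable_density_cdf[OF p] by (simp_all add: measurable_lborel1)
  show ?thesis
    unfolding density_cdf_integral copula_update_def by measurable
qed

text \<open>Averaging the fully updated distribution function over an observation drawn from any
  density \<open>q\<close> gives back the old one: this is the martingale property of the update.\<close>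

lemma nn_integral_density_cdf_copula_update:
  assumes p: "is_density p" and q: "is_density q" and \<rho>: "\<bar>\<rho>\<bar> < 1"
  shows "(\<integral>\<^sup>+y. ennreal (q y) * ennreal (density_cdf (copula_update \<rho> 1 (density_cdf q y) p) y0) \<partial>lborel)
    = ennreal (density_cdf p y0)"
proof -
  have [measurable]: "p \<in> borel_measurable borel" "density_cdf p \<in> borel_measurable borel"
    "q \<in> borel_measurable borel" "density_cdf q \<in> borel_measurable borel"
    using is_densityD(1) borel_measurable_density_cdf p q by blast+
  define f where "f t y = ennreal (q y) * (indicator {..y0} t * ennreal (p t) *
      ennreal (gauss_copula_clamped \<rho> (density_cdf p t) (density_cdf q y)))" for t y
  have f_meas: "case_prod f \<in> borel_measurable (lborel \<Otimes>\<^sub>M lborel)"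
    unfolding f_def by measurable
  have upd: "ennreal (density_cdf (copula_update \<rho> 1 r p) y0) =
      (\<integral>\<^sup>+t. indicator {..y0} t * ennreal (p t) * ennreal (gauss_copula_clamped \<rho> (density_cdf p t) r) \<partial>lborel)"
    for r
    unfolding nn_integral_atMost_density[OF is_density_copula_update_1[OF p \<rho>], symmetric]
    using is_densityD(2)[OF p] gauss_copula_clamped_nonneg[OF \<rho>]
    by (intro nn_integral_cong) (simp add: copula_update_def ennreal_mult ac_simps)
  have inner: "(\<integral>\<^sup>+y. f t y \<partial>lborel) = indicator {..y0} t * ennreal (p t)" for t
  proof -
    have "(\<integral>\<^sup>+y. f t y \<partial>lborel) = indicator {..y0} t * ennreal (p t) *
        (\<integral>\<^sup>+y. ennreal (q y) * ennreal (gauss_copula_clamped \<rho> (density_cdf q y) (density_cdf p t)) \<partial>lborel)"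
      unfolding f_def gauss_copula_clamped_commute[of \<rho> "density_cdf p t"]
      by (subst nn_integral_cmult[symmetric]) (measurable, auto intro!: nn_integral_cong simp: ac_simps)
    also have "(\<integral>\<^sup>+y. ennreal (q y) * ennreal (gauss_copula_clamped \<rho> (density_cdf q y) (density_cdf p t)) \<partial>lborel) = 1"
      unfolding nn_integral_density_cdf_transform[OF q, where g="\<lambda>u. ennreal (gauss_copula_clamped \<rho> u _)", simplified]
      by (rule nn_integral_gauss_copula_clamped[OF \<rho>])
    finally show ?thesis by simp
  qed
  have "(\<integral>\<^sup>+y. ennreal (q y) * ennreal (density_cdf (copula_update \<rho> 1 (density_cdf q y) p) y0) \<partial>lborel) =
      (\<integral>\<^sup>+y. (\<integral>\<^sup>+t. f t y \<partial>lborel) \<partial>lborel)"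
    unfolding upd f_def by (intro nn_integral_cong nn_integral_cmult[symmetric]) measurable
  also have "\<dots> = (\<integral>\<^sup>+t. (\<integral>\<^sup>+y. f t y \<partial>lborel) \<partial>lborel)"
    by (rule lborel_pair.Fubini'[OF f_meas])
  also have "\<dots> = ennreal (density_cdf p y0)"
    unfolding inner by (rule nn_integral_atMost_density[OF p])
  finally show ?thesis .
qed

section \<open>The covariate-dependent weights\<close>

lemma alpha_pos:
  assumes "i \<ge> 1"
  shows "alpha i > 0"
proof -
  have "1 / real i \<le> 1"
    using assms by simp
  then show ?thesis
    unfolding alpha_def by (intro divide_pos_pos) auto
qed

lemma alpha_le_half:
  assumes "i \<ge> 1"
  shows "alpha i \<le> 1 / 2"
proof -
  have "(real i - 1) * (real i - 2) \<ge> 0 \<or> i = 1"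
    using assms by (cases "i \<ge> 2") auto
  then have "4 * real i - 2 \<le> real i * real i + real i"
    by (auto simp: algebra_simps)
  then show ?thesis
    using assms unfolding alpha_def by (simp add: field_simps)
qed

lemma sum_alpha_squared_pos:
  assumes "N < M"
  shows "(\<Sum>i = N + 1..M. (alpha i)\<^sup>2) > 0"
proof -
  have "(alpha M)\<^sup>2 > 0"
    using assms alpha_pos[of M] by simp
  moreover have "(alpha M)\<^sup>2 \<le> (\<Sum>i = N + 1..M. (alpha i)\<^sup>2)"
    using assms by (intro member_le_sum) auto
  ultimately show ?thesis
    by linarith
qed

text \<open>The constant \<open>C\<close> of the theorem: the copula product in \<^const>\<open>alpha_x\<close> is bounded
  uniformly in the second covariate, and the weight is then at most twice that bound times
  \<open>alpha i\<close>, because \<open>alpha i \<le> 1/2\<close>.\<close>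

definition weight_bound :: "('d::finite \<Rightarrow> real) \<Rightarrow> real^'d \<Rightarrow> real" where
  "weight_bound \<rho>x x = 2 * (\<Prod>j\<in>UNIV. exp ((x $ j)\<^sup>2 / 2) / sqrt (1 - (\<rho>x j)\<^sup>2))"

lemma weight_bound_pos:
  assumes "\<And>j. 0 < \<rho>x j \<and> \<rho>x j < 1"
  shows "weight_bound \<rho>x x > 0"
proof -
  have "(\<rho>x j)\<^sup>2 < 1" for j
    using assms[of j] by (simp add: abs_square_less_1)
  then show ?thesis
    unfolding weight_bound_def by (intro mult_pos_pos prod_pos) auto
qed

lemma alpha_x_bounds:
  assumes \<rho>x: "\<And>j. 0 < \<rho>x j \<and> \<rho>x j < 1" and "i \<ge> 1"
  shows "0 \<le> alpha_x i \<rho>x x x'" "alpha_x i \<rho>x x x' \<le> 1"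
    "alpha_x i \<rho>x x x' \<le> weight_bound \<rho>x x * alpha i"
proof -
  define c where "c = (\<Prod>j\<in>UNIV. gauss_copula (\<rho>x j) (Phi (x $ j)) (Phi (x' $ j)))"
  have \<rho>x': "\<bar>\<rho>x j\<bar> < 1" for j
    using \<rho>x[of j] by simp
  have c0: "c \<ge> 0"
    unfolding c_def using gauss_copula_nonneg[OF \<rho>x'] by (intro prod_nonneg) auto
  have c_le: "2 * c \<le> weight_bound \<rho>x x"
    unfolding c_def weight_bound_def using gauss_copula_nonneg[OF \<rho>x'] gauss_copula_Phi_le[OF \<rho>x']
    by (intro mult_left_mono prod_mono) auto
  have a: "alpha i > 0" "alpha i \<le> 1 / 2"
    using alpha_pos alpha_le_half \<open>i \<ge> 1\<close> by auto
  have ac0: "alpha i * c \<ge> 0"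
    using a c0 by simp
  have den: "1 - alpha i + alpha i * c \<ge> 1 / 2"
    using a ac0 by linarith
  have weight: "alpha_x i \<rho>x x x' = alpha i * c / (1 - alpha i + alpha i * c)"
    unfolding alpha_x_def c_def Let_def ..
  show "0 \<le> alpha_x i \<rho>x x x'"
    unfolding weight using ac0 den by simp
  show "alpha_x i \<rho>x x x' \<le> 1"
    unfolding weight using ac0 den a by (simp add: divide_le_eq_1)
  have "alpha i * c / (1 - alpha i + alpha i * c) \<le> alpha i * c / (1 / 2)"
    using ac0 den by (intro divide_left_mono) auto
  also have "\<dots> \<le> weight_bound \<rho>x x * alpha i"
    using c_le a by (simp add: mult.commute mult_right_mono)
  finally show "alpha_x i \<rho>x x x' \<le> weight_bound \<rho>x x * alpha i"
    unfolding weight .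
qed

lemma borel_measurable_vec_nth [measurable]: "(\<lambda>x::real^'d. x $ j) \<in> borel_measurable borel"
  by (intro borel_measurable_continuous_onI continuous_intros)

lemma borel_measurable_alpha_x [measurable (raw)]:
  assumes [measurable]: "f \<in> borel_measurable M" "g \<in> borel_measurable M"
  shows "(\<lambda>w. alpha_x i \<rho>x (f w) (g w)) \<in> borel_measurable M"
  unfolding alpha_x_def Let_def gauss_copula_Phi_eq by measurable

lemma emeasure_distr_if:
  "emeasure (distr L S f) A =
    (if A \<in> sets S \<and> measure_space (space S) (sets S) (\<lambda>A. emeasure L (f -` A \<inter> space L))
     then emeasure L (f -` A \<inter> space L) else 0)"
  unfolding distr_def emeasure_measure_of_conv by (simp add: sets.sigma_sets_eq)

text \<open>If the preimage of some set is not measurable then neither is that of its complement, so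
  the two of them cannot carry the total mass one.\<close>

lemma distr_AE_eq_or_null:
  assumes L: "prob_space L" and g: "g \<in> L \<rightarrow>\<^sub>M S" and Z: "Z \<in> null_sets L"
    and fg: "\<And>\<omega>. \<omega> \<in> space L - Z \<Longrightarrow> f \<omega> = g \<omega>" and fS: "\<And>\<omega>. \<omega> \<in> space L \<Longrightarrow> f \<omega> \<in> space S"
  shows "distr L S f = distr L S g \<or> (\<forall>A. emeasure (distr L S f) A = 0)"
proof (cases "measure_space (space S) (sets S) (\<lambda>A. emeasure L (f -` A \<inter> space L))")
  case False
  then show ?thesis by (simp add: emeasure_distr_if)
next
  case True
  interpret prob_space L by (rule L)
  have em: "emeasure (distr L S f) A = emeasure L (f -` A \<inter> space L)" if "A \<in> sets S" for A
    using True that by (simp add: emeasure_distr_if)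
  have f_sets: "f -` A \<inter> space L \<in> sets L" if A: "A \<in> sets S" for A
  proof (rule ccontr)
    assume nF: "f -` A \<inter> space L \<notin> sets L"
    have "f -` (space S - A) \<inter> space L = space L - (f -` A \<inter> space L)"
      using fS by auto
    moreover have "space L - (f -` A \<inter> space L) \<notin> sets L"
      using nF by (metis Diff_Diff_Int inf.absorb_iff2 inf_le2 sets.Diff sets.top)
    ultimately have "emeasure (distr L S f) A = 0" "emeasure (distr L S f) (space S - A) = 0"
      using A nF em[OF A] em[of "space S - A"] by (auto simp: emeasure_notin_sets)
    moreover have "emeasure (distr L S f) A + emeasure (distr L S f) (space S - A) = emeasure (distr L S f) (space S)"
      using A sets.sets_into_space[OF A] by (subst plus_emeasure) (auto simp: Un_absorb1)
    moreover have "emeasure (distr L S f) (space S) = 1"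
      using em[of "space S"] fS emeasure_space_1 by (simp add: Int_absorb1 subsetI)
    ultimately show False by simp
  qed
  have "emeasure (distr L S f) A = emeasure (distr L S g) A" if A: "A \<in> sets S" for A
  proof -
    have G: "g -` A \<inter> space L \<in> sets L"
      using g A by (rule measurable_sets)
    have "(f -` A \<inter> space L) \<union> Z = (g -` A \<inter> space L) \<union> Z"
      using fg sets.sets_into_space[OF null_setsD2[OF Z]] by auto
    then have "emeasure L (f -` A \<inter> space L) = emeasure L (g -` A \<inter> space L)"
      using emeasure_Un_null_set[OF f_sets[OF A] Z] emeasure_Un_null_set[OF G Z] by simp
    then show ?thesis
      using em[OF A] emeasure_distr[OF g A] by simp
  qed
  then show ?thesis
    by (intro disjI1 measure_eqI) auto
qed

lemma emeasure_join_null: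
  assumes "\<And>A. emeasure D A = 0"
  shows "emeasure (join D) B = 0"
proof -
  have "D = null_measure D"
    by (rule measure_eqI) (simp_all add: assms)
  then have "integral\<^sup>N D h = 0" for h
    by (metis nn_integral_null_measure)
  then show ?thesis
    unfolding join_def emeasure_measure_of_conv by simp
qed

lemma emeasure_bind_null:
  assumes "\<And>A. emeasure L A = 0" "space L \<noteq> {}"
  shows "emeasure (bind L f) B = 0"
proof -
  have "emeasure (distr L S f) A = 0" for S A
    unfolding emeasure_distr_if using assms(1) by simp
  then show ?thesis
    unfolding bind_nonempty[OF assms(2)] by (intro emeasure_join_null)
qed

lemma bind_AE_eq_or_null:
  assumes L: "prob_space L" and g: "g \<in> L \<rightarrow>\<^sub>M subprob_algebra S" and Z: "Z \<in> null_sets L"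
    and fg: "\<And>\<omega>. \<omega> \<in> space L - Z \<Longrightarrow> f \<omega> = g \<omega>"
    and f: "\<And>\<omega>. \<omega> \<in> space L \<Longrightarrow> f \<omega> \<in> space (subprob_algebra S)"
  shows "bind L f = bind L g \<or> (\<forall>A. emeasure (bind L f) A = 0)"
proof -
  have ne: "space L \<noteq> {}"
    using prob_space.not_empty[OF L] .
  have "bind L h = join (distr L (subprob_algebra S) h)"
    if "\<And>\<omega>. \<omega> \<in> space L \<Longrightarrow> h \<omega> \<in> space (subprob_algebra S)" for h
  proof -
    have "h (SOME \<omega>. \<omega> \<in> space L) \<in> space (subprob_algebra S)"
      using that ne by (simp add: some_in_eq)
    then have "subprob_algebra (h (SOME \<omega>. \<omega> \<in> space L)) = subprob_algebra S"
      by (intro subprob_algebra_cong) (simp add: space_subprob_algebra)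
    then show ?thesis
      using ne by (simp add: bind_nonempty)
  qed
  moreover have "g \<omega> \<in> space (subprob_algebra S)" if "\<omega> \<in> space L" for \<omega>
    using measurable_space[OF g that] .
  moreover have "distr L (subprob_algebra S) f = distr L (subprob_algebra S) g \<or>
      (\<forall>A. emeasure (distr L (subprob_algebra S) f) A = 0)"
    by (rule distr_AE_eq_or_null[OF L g Z fg f])
  ultimately show ?thesis
    using f emeasure_join_null by metis
qed

lemma (in prob_space) Hoeffdings_lemma_nn_integral_symmetric:
  assumes f: "f \<in> borel_measurable M" "\<And>x. x \<in> space M \<Longrightarrow> \<bar>f x\<bar> \<le> B" "expectation f = 0"
  shows "(\<integral>\<^sup>+x. ennreal (exp (l * f x)) \<partial>M) \<le> ennreal (exp (l\<^sup>2 * B\<^sup>2 / 2))"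
proof -
  have pos: "(\<integral>\<^sup>+x. ennreal (exp (l * g x)) \<partial>M) \<le> ennreal (exp (l\<^sup>2 * B\<^sup>2 / 2))"
    if l: "l > 0" and g: "g \<in> borel_measurable M" "\<And>x. x \<in> space M \<Longrightarrow> \<bar>g x\<bar> \<le> B" "expectation g = 0"
    for l g
  proof -
    have "g x \<in> {- B..B}" if "x \<in> space M" for x
      using g(2)[OF that] by auto
    then have "AE x in M. g x \<in> {- B..B}"
      by (intro AE_I2)
    then interpret interval_bounded_random_variable M g "- B" B
      using g(1) by unfold_locales
    have "l\<^sup>2 * (B - - B)\<^sup>2 / 8 = l\<^sup>2 * B\<^sup>2 / 2"
      by (simp add: power2_eq_square)
    then show ?thesis
      using Hoeffdings_lemma_nn_integral_0[OF l g(3)] by (simp add: mult.commute)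
  qed
  consider "l > 0" | "l = 0" | "l < 0"
    by linarith
  then show ?thesis
  proof cases
    case 1
    then show ?thesis
      using pos[OF _ f] by blast
  next
    case 2
    then show ?thesis
      by (simp add: emeasure_space_1)
  next
    case 3
    have "expectation (\<lambda>x. - f x) = 0"
      using f(3) by simp
    then have "(\<integral>\<^sup>+x. ennreal (exp (- l * - f x)) \<partial>M) \<le> ennreal (exp ((- l)\<^sup>2 * B\<^sup>2 / 2))"
      using 3 f(1,2) by (intro pos) auto
    then show ?thesis
      by simp
  qed
qed

text \<open>Chernoff's bound with the optimal parameter \<open>l = \<epsilon> / V\<close>.\<close>

lemma (in prob_space) prob_abs_ge_le_of_mgf:
  assumes [measurable]: "f \<in> borel_measurable M" and "V > 0" "\<epsilon> \<ge> 0"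
    and mgf: "\<And>l. (\<integral>\<^sup>+x. ennreal (exp (l * f x)) \<partial>M) \<le> ennreal (exp (l\<^sup>2 * V / 2))"
  shows "prob {x \<in> space M. \<bar>f x\<bar> \<ge> \<epsilon>} \<le> 2 * exp (- \<epsilon>\<^sup>2 / (2 * V))"
proof (cases "\<epsilon> = 0")
  case True
  then show ?thesis by (simp add: prob_space)
next
  case False
  define l where "l = \<epsilon> / V"
  have l: "l > 0"
    using False \<open>V > 0\<close> \<open>\<epsilon> \<ge> 0\<close> by (simp add: l_def)
  have exponent: "- l * \<epsilon> + l\<^sup>2 * V / 2 = - \<epsilon>\<^sup>2 / (2 * V)"
    using \<open>V > 0\<close> by (simp add: l_def power2_eq_square field_simps)
  have one_sided: "emeasure M {x \<in> space M. g x \<ge> \<epsilon>} \<le> ennreal (exp (- \<epsilon>\<^sup>2 / (2 * V)))"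
    if [measurable]: "g \<in> borel_measurable M"
      and mgf_g: "(\<integral>\<^sup>+x. ennreal (exp (l * g x)) \<partial>M) \<le> ennreal (exp (l\<^sup>2 * V / 2))" for g
  proof -
    have "emeasure M {x \<in> space M. g x \<ge> \<epsilon>} \<le>
        ennreal (exp (- l * \<epsilon>)) * (\<integral>\<^sup>+x. ennreal (exp (l * g x)) * indicator (space M) x \<partial>M)"
      by (rule Chernoff_ineq_nn_integral_ge[OF l]) auto
    also have "(\<integral>\<^sup>+x. ennreal (exp (l * g x)) * indicator (space M) x \<partial>M) = (\<integral>\<^sup>+x. ennreal (exp (l * g x)) \<partial>M)"
      by (intro nn_integral_cong) simp
    also have "ennreal (exp (- l * \<epsilon>)) * \<dots> \<le> ennreal (exp (- l * \<epsilon>)) * ennreal (exp (l\<^sup>2 * V / 2))"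
      by (intro mult_left_mono mgf_g) simp
    also have "\<dots> = ennreal (exp (- l * \<epsilon>) * exp (l\<^sup>2 * V / 2))"
      by (simp add: ennreal_mult)
    also have "\<dots> = ennreal (exp (- \<epsilon>\<^sup>2 / (2 * V)))"
      unfolding exp_add[symmetric] exponent ..
    finally show ?thesis .
  qed
  have "{x \<in> space M. \<bar>f x\<bar> \<ge> \<epsilon>} = {x \<in> space M. f x \<ge> \<epsilon>} \<union> {x \<in> space M. - f x \<ge> \<epsilon>}"
    by auto
  then have "emeasure M {x \<in> space M. \<bar>f x\<bar> \<ge> \<epsilon>} \<le>
      emeasure M {x \<in> space M. f x \<ge> \<epsilon>} + emeasure M {x \<in> space M. - f x \<ge> \<epsilon>}"
    by (simp add: emeasure_subadditive)
  also have "\<dots> \<le> ennreal (exp (- \<epsilon>\<^sup>2 / (2 * V))) + ennreal (exp (- \<epsilon>\<^sup>2 / (2 * V)))"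
    using mgf[of l] mgf[of "- l"] by (intro add_mono one_sided) auto
  finally show ?thesis
    by (simp add: emeasure_eq_measure flip: ennreal_plus)
qed

section \<open>Predictive resampling\<close>

lemma space_path_space [simp]: "space path_space = UNIV"
  unfolding path_space_def by (simp add: space_PiM)

lemma measurable_path_component [measurable]: "(\<lambda>\<omega>. \<omega> k) \<in> path_space \<rightarrow>\<^sub>M borel"
  unfolding path_space_def by measurable

lemma measurable_fun_upd_path [measurable (raw)]:
  assumes [measurable]: "f \<in> M \<rightarrow>\<^sub>M path_space" "g \<in> M \<rightarrow>\<^sub>M borel"
  shows "(\<lambda>w. (f w)(k := g w)) \<in> M \<rightarrow>\<^sub>M path_space"
proof -
  have "(\<lambda>w i. if i = k then g w else f w i) \<in> M \<rightarrow>\<^sub>M path_space"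
    unfolding path_space_def
  proof (rule measurable_PiM_single')
    fix i :: nat
    have [measurable]: "(\<lambda>w. f w i) \<in> M \<rightarrow>\<^sub>M borel"
      using measurable_compose[OF assms(1) measurable_path_component[of i]] .
    show "(\<lambda>w. if i = k then g w else f w i) \<in> M \<rightarrow>\<^sub>M borel"
      by (cases "i = k") simp_all
  qed auto
  then show ?thesis
    by (simp add: fun_upd_def)
qed

lemma measurable_fst_borel [measurable]:
  "fst \<in> (borel :: ('a::second_countable_topology \<times> 'b::second_countable_topology) measure) \<rightarrow>\<^sub>M borel"
  unfolding borel_prod[symmetric] by simp

lemma measurable_snd_borel [measurable]:
  "snd \<in> (borel :: ('a::second_countable_topology \<times> 'b::second_countable_topology) measure) \<rightarrow>\<^sub>M borel"
  unfolding borel_prod[symmetric] by simp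

locale predictive_resampling =
  fixes p0 :: "real^'d::finite \<Rightarrow> real \<Rightarrow> real" and \<rho>y :: real and \<rho>x :: "'d \<Rightarrow> real"
    and n :: nat and xs :: "nat \<Rightarrow> real^'d"
  assumes is_density_p0: "\<And>x'. is_density (p0 x')"
    and \<rho>y: "0 < \<rho>y" "\<rho>y < 1"
    and \<rho>x: "\<And>j. 0 < \<rho>x j \<and> \<rho>x j < 1"
    and n_pos: "n \<ge> 1"
begin

abbreviation "pd \<equiv> pdens p0 \<rho>y \<rho>x n"
abbreviation "pc \<equiv> pcdf p0 \<rho>y \<rho>x n"
abbreviation "st \<equiv> step p0 \<rho>y \<rho>x n xs"
abbreviation "lw \<equiv> law p0 \<rho>y \<rho>x n xs"
abbreviation "weight k x0 X \<equiv> alpha_x (n + k + 1) \<rho>x x0 X"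

lemma abs_\<rho>y: "\<bar>\<rho>y\<bar> < 1"
  using \<rho>y by simp

lemma weight_bounds:
  "0 \<le> weight k x0 X" "weight k x0 X \<le> 1" "weight k x0 X \<le> weight_bound \<rho>x x0 * alpha (n + k + 1)"
  using alpha_x_bounds[OF \<rho>x, of "n + k + 1"] by auto

lemma pcdf_eq_density_cdf: "pc k \<omega> x y = density_cdf (pd k \<omega> x) y"
  unfolding pcdf_def density_cdf_def ..

lemma pdens_Suc_eq_copula_update:
  assumes "\<And>x. is_density (pd k \<omega> x)"
  shows "pd (Suc k) \<omega> x = copula_update \<rho>y (weight k x (fst (\<omega> k))) (pc k \<omega> (fst (\<omega> k)) (snd (\<omega> k))) (pd k \<omega> x)"
proof -
  have "pd (Suc k) \<omega> x y = (1 - weight k x (fst (\<omega> k)) + weight k x (fst (\<omega> k)) *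
      gauss_copula \<rho>y (pc k \<omega> x y) (pc k \<omega> (fst (\<omega> k)) (snd (\<omega> k)))) * pd k \<omega> x y" for y
    unfolding pcdf_def by (simp add: Let_def)
  then show ?thesis
    using gauss_copula_clamped_eq[OF density_cdf_bounds density_cdf_bounds, OF assms assms]
    by (simp add: fun_eq_iff copula_update_def pcdf_eq_density_cdf)
qed

lemma is_density_pdens: "is_density (pd k \<omega> x)"
proof (induction k arbitrary: x)
  case 0
  then show ?case using is_density_p0 by simp
next
  case (Suc k)
  then show ?case
    unfolding pdens_Suc_eq_copula_update[OF Suc.IH]
    using weight_bounds abs_\<rho>y by (intro is_density_copula_update) auto
qed

lemmas pdens_Suc = pdens_Suc_eq_copula_update[OF is_density_pdens]

lemma pcdf_bounds: "pc k \<omega> x y \<in> {0..1}"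
  unfolding pcdf_eq_density_cdf by (rule density_cdf_bounds[OF is_density_pdens])

lemma pdens_fun_upd: "k \<le> j \<Longrightarrow> pd k (fun_upd \<omega> j z) = pd k \<omega>"
proof (induction k)
  case (Suc k)
  have "pd k (fun_upd \<omega> j z) = pd k \<omega>"
    using Suc.prems by (intro Suc.IH) simp
  moreover have "(fun_upd \<omega> j z) k = \<omega> k"
    using Suc.prems by simp
  ultimately show ?case
    by (simp only: pdens.simps(2))
qed simp

lemma pcdf_fun_upd: "k \<le> j \<Longrightarrow> pc k (fun_upd \<omega> j z) = pc k \<omega>"
  by (simp add: pcdf_def pdens_fun_upd fun_eq_iff)

lemma pcdf_Suc_fun_upd:
  "pc (Suc k) (fun_upd \<omega> k z) x0 y0 = (1 - weight k x0 (fst z)) * pc k \<omega> x0 y0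
     + weight k x0 (fst z) * density_cdf (copula_update \<rho>y 1 (pc k \<omega> (fst z) (snd z)) (pd k \<omega> x0)) y0"
proof -
  have "pd (Suc k) (fun_upd \<omega> k z) x0 =
      copula_update \<rho>y (weight k x0 (fst z)) (pc k \<omega> (fst z) (snd z)) (pd k \<omega> x0)"
    by (simp only: pdens_Suc fun_upd_same pdens_fun_upd[OF order_refl] pcdf_fun_upd[OF order_refl])
  then show ?thesis
    unfolding pcdf_eq_density_cdf[of "Suc k"] pcdf_eq_density_cdf[of k \<omega> x0]
    by (simp only: density_cdf_copula_update[OF is_density_pdens abs_\<rho>y, where a="weight k x0 (fst z)"])
qed

definition resampled_covariate :: "nat \<Rightarrow> (nat \<Rightarrow> (real^'d) \<times> real) \<Rightarrow> real^'d" where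
  "resampled_covariate j \<omega> = (if j < n then xs j else fst (\<omega> (j - n)))"

definition step_draw :: "nat \<Rightarrow> (nat \<Rightarrow> (real^'d) \<times> real) \<Rightarrow> nat \<Rightarrow> ((real^'d) \<times> real) measure" where
  "step_draw k \<omega> j = distr (density lborel (\<lambda>y. ennreal (pd k \<omega> (resampled_covariate j \<omega>) y))) borel
     (\<lambda>y. (resampled_covariate j \<omega>, y))"

lemma step_eq_bind: "st k \<omega> = bind (uniform_count_measure {..<n + k}) (step_draw k \<omega>)"
  unfolding step_def step_draw_def resampled_covariate_def Let_def ..

lemma prob_space_step_draw: "prob_space (step_draw k \<omega> j)"
proof -
  interpret real_distribution "density lborel (\<lambda>y. ennreal (pd k \<omega> (resampled_covariate j \<omega>) y))"
    by (rule real_distribution_density_lborel[OF is_density_pdens])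
  show ?thesis
    unfolding step_draw_def by (intro prob_space_distr) simp
qed

lemma measurable_step_draw: "step_draw k \<omega> \<in> uniform_count_measure {..<n + k} \<rightarrow>\<^sub>M subprob_algebra borel"
proof -
  have "step_draw k \<omega> \<in> count_space {..<n + k} \<rightarrow>\<^sub>M subprob_algebra borel"
    using prob_space_step_draw
    by (auto simp: space_subprob_algebra prob_space_imp_subprob_space step_draw_def)
  then show ?thesis
    by (simp only: measurable_cong_sets[OF sets_uniform_count_measure_count_space refl])
qed

lemma prob_space_uniform_step: "prob_space (uniform_count_measure {..<n + k})"
  using n_pos by (intro prob_space_uniform_count_measure) auto

lemma prob_space_step: "prob_space (st k \<omega>)"
  unfolding step_eq_bind using prob_space_step_draw
  by (intro prob_space.prob_space_bind[OF prob_space_uniform_step _ measurable_step_draw]) auto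

lemma sets_step [simp, measurable_cong]: "sets (st k \<omega>) = sets borel"
  unfolding step_eq_bind using n_pos
  by (subst sets_bind[where N=borel]) (auto simp: space_uniform_count_measure step_draw_def)

lemma nn_integral_step:
  assumes [measurable]: "h \<in> borel_measurable borel"
  shows "(\<integral>\<^sup>+z. h z \<partial>st k \<omega>) = (\<Sum>j<n + k.
    \<integral>\<^sup>+y. ennreal (pd k \<omega> (resampled_covariate j \<omega>) y) * h (resampled_covariate j \<omega>, y) \<partial>lborel) / of_nat (n + k)"
proof -
  have [measurable]: "pd k \<omega> x \<in> borel_measurable borel" for x
    using is_densityD(1)[OF is_density_pdens] .
  have "inverse (of_nat (n + k) :: ennreal) = ennreal (inverse (real (n + k)))"
    using n_pos by (simp only: ennreal_of_nat_eq_real_of_nat inverse_ennreal)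
  then have inv: "ennreal (1 / real (card {..<n + k})) = inverse (of_nat (n + k))"
    by (simp add: inverse_eq_divide)
  have "(\<integral>\<^sup>+z. h z \<partial>st k \<omega>) = (\<integral>\<^sup>+j. (\<integral>\<^sup>+z. h z \<partial>step_draw k \<omega> j) \<partial>uniform_count_measure {..<n + k})"
    unfolding step_eq_bind by (rule nn_integral_bind[OF assms measurable_step_draw])
  also have "\<dots> = (\<Sum>j<n + k. inverse (of_nat (n + k)) *
      (\<integral>\<^sup>+y. ennreal (pd k \<omega> (resampled_covariate j \<omega>) y) * h (resampled_covariate j \<omega>, y) \<partial>lborel))"
    unfolding uniform_count_measure_def
    by (subst nn_integral_point_measure_finite)
       (auto simp: inv[simplified] step_draw_def nn_integral_distr nn_integral_density)
  also have "\<dots> = (\<Sum>j<n + k.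
      \<integral>\<^sup>+y. ennreal (pd k \<omega> (resampled_covariate j \<omega>) y) * h (resampled_covariate j \<omega>, y) \<partial>lborel) / of_nat (n + k)"
    by (simp add: sum_distrib_left[symmetric] divide_ennreal_def mult.commute)
  finally show ?thesis .
qed

definition step_path :: "nat \<Rightarrow> (nat \<Rightarrow> (real^'d) \<times> real) \<Rightarrow> (nat \<Rightarrow> (real^'d) \<times> real) measure" where
  "step_path k \<omega> = distr (st k \<omega>) path_space (\<lambda>z. fun_upd \<omega> k z)"

lemma law_Suc: "lw (Suc k) = bind (lw k) (step_path k)"
  unfolding step_path_def by simp

lemma measurable_fun_upd_step: "(\<lambda>z. fun_upd \<omega> k z) \<in> st k \<omega> \<rightarrow>\<^sub>M path_space"
proof -
  have "(\<lambda>z. fun_upd \<omega> k z) \<in> borel \<rightarrow>\<^sub>M path_space"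
    by measurable
  then show ?thesis
    by (simp cong: measurable_cong_sets)
qed

lemma prob_space_step_path: "prob_space (step_path k \<omega>)"
  unfolding step_path_def using prob_space_step measurable_fun_upd_step
  by (intro prob_space.prob_space_distr) auto

lemma nn_integral_step_path:
  assumes "g \<in> borel_measurable path_space"
  shows "(\<integral>\<^sup>+w. g w \<partial>step_path k \<omega>) = (\<integral>\<^sup>+z. g (fun_upd \<omega> k z) \<partial>st k \<omega>)"
  unfolding step_path_def using measurable_fun_upd_step assms by (simp add: nn_integral_distr)

lemma sets_law [simp, measurable_cong]: "sets (lw k) = sets path_space"
proof (induction k)
  case (Suc k)
  have "space (lw k) = space path_space"
    using sets_eq_imp_space_eq[OF Suc.IH] .
  then show ?case
    unfolding law.simps(2) by (intro sets_bind[where N=path_space]) auto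
qed simp

lemma space_law [simp]: "space (lw k) = UNIV"
  using sets_eq_imp_space_eq[OF sets_law] by simp

end

locale predictive_resampling_measurable = predictive_resampling p0 \<rho>y \<rho>x n xs
  for p0 :: "real^'d::finite \<Rightarrow> real \<Rightarrow> real" and \<rho>y \<rho>x n xs +
  assumes p0_measurable: "(\<lambda>z. p0 (fst z) (snd z)) \<in> borel_measurable (borel \<Otimes>\<^sub>M borel)"
begin

lemma measurable_p0 [measurable (raw)]:
  assumes [measurable]: "g \<in> borel_measurable M" "h \<in> borel_measurable M"
  shows "(\<lambda>w. p0 (g w) (h w)) \<in> borel_measurable M"
  using measurable_compose[OF measurable_Pair[OF assms] p0_measurable] by simp

abbreviation path_point_space :: "((nat \<Rightarrow> (real^'d) \<times> real) \<times> (real^'d) \<times> real) measure" where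
  "path_point_space \<equiv> path_space \<Otimes>\<^sub>M (borel \<Otimes>\<^sub>M borel)"

lemma measurable_compose_path_point:
  assumes "(\<lambda>w. F (fst w) (fst (snd w)) (snd (snd w))) \<in> borel_measurable path_point_space"
    and [measurable]: "f \<in> M \<rightarrow>\<^sub>M path_space" "g \<in> borel_measurable M" "h \<in> borel_measurable M"
  shows "(\<lambda>w. F (f w) (g w) (h w)) \<in> borel_measurable M"
proof -
  have "(\<lambda>w. (f w, g w, h w)) \<in> M \<rightarrow>\<^sub>M path_point_space"
    by measurable
  from measurable_compose[OF this assms(1)] show ?thesis
    by simp
qed

lemma measurable_pcdf_joint_if_pdens:
  assumes "(\<lambda>w. pd k (fst w) (fst (snd w)) (snd (snd w))) \<in> borel_measurable path_point_space"
  shows "(\<lambda>w. pc k (fst w) (fst (snd w)) (snd (snd w))) \<in> borel_measurable path_point_space"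
proof -
  have [measurable]: "(\<lambda>w. pd k (fst (fst w)) (fst (snd (fst w))) (snd w)) \<in>
      borel_measurable (path_point_space \<Otimes>\<^sub>M lborel)"
    by (rule measurable_compose_path_point[OF assms]) measurable
  show ?thesis
    unfolding pcdf_eq_density_cdf density_cdf_integral by measurable
qed

lemma measurable_pdens_joint:
  "(\<lambda>w. pd k (fst w) (fst (snd w)) (snd (snd w))) \<in> borel_measurable path_point_space"
proof (induction k)
  case 0
  show ?case by simp measurable
next
  case (Suc k)
  note [measurable] = Suc.IH measurable_pcdf_joint_if_pdens[OF Suc.IH]
  have [measurable]: "(\<lambda>w. pc k (fst w) (fst (fst w k)) (snd (fst w k))) \<in> borel_measurable path_point_space"
    by (rule measurable_compose_path_point[OF measurable_pcdf_joint_if_pdens[OF Suc.IH]]) measurable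
  show ?case
    unfolding pdens_Suc copula_update_def pcdf_eq_density_cdf[symmetric] by measurable
qed

lemma measurable_pdens [measurable (raw)]:
  assumes [measurable]: "f \<in> M \<rightarrow>\<^sub>M path_space" "g \<in> borel_measurable M" "h \<in> borel_measurable M"
  shows "(\<lambda>w. pd k (f w) (g w) (h w)) \<in> borel_measurable M"
  by (rule measurable_compose_path_point[OF measurable_pdens_joint]) measurable

lemma measurable_pcdf [measurable (raw)]:
  assumes [measurable]: "f \<in> M \<rightarrow>\<^sub>M path_space" "g \<in> borel_measurable M" "h \<in> borel_measurable M"
  shows "(\<lambda>w. pc k (f w) (g w) (h w)) \<in> borel_measurable M"
  by (rule measurable_compose_path_point[OF measurable_pcdf_joint_if_pdens[OF measurable_pdens_joint]])
    measurable

lemma measurable_pcdf_point [measurable]: "(\<lambda>z. pc k \<omega> (fst z) (snd z)) \<in> borel_measurable borel"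
  by (rule measurable_pcdf[where f="\<lambda>_. \<omega>"]) (auto intro: measurable_const)

lemma measurable_resampled_covariate [measurable]: "resampled_covariate j \<in> path_space \<rightarrow>\<^sub>M borel"
  unfolding resampled_covariate_def by (cases "j < n") simp_all

lemma measurable_step_path: "step_path k \<in> path_space \<rightarrow>\<^sub>M subprob_algebra path_space"
proof (rule measurable_subprob_algebra)
  show "subprob_space (step_path k \<omega>)" for \<omega>
    using prob_space_step_path by (simp add: prob_space_imp_subprob_space)
  show "sets (step_path k \<omega>) = sets path_space" for \<omega>
    unfolding step_path_def by simp
  fix A :: "(nat \<Rightarrow> (real^'d) \<times> real) set"
  assume [measurable]: "A \<in> sets path_space"
  have "emeasure (step_path k \<omega>) A = (\<Sum>j<n + k. \<integral>\<^sup>+y. ennreal (pd k \<omega> (resampled_covariate j \<omega>) y) *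
      indicator A (fun_upd \<omega> k (resampled_covariate j \<omega>, y)) \<partial>lborel) / of_nat (n + k)" for \<omega>
  proof -
    have "emeasure (step_path k \<omega>) A = (\<integral>\<^sup>+w. indicator A w \<partial>step_path k \<omega>)"
      by (rule nn_integral_indicator[symmetric]) (simp add: step_path_def)
    also have "\<dots> = (\<integral>\<^sup>+z. indicator A (fun_upd \<omega> k z) \<partial>st k \<omega>)"
      by (rule nn_integral_step_path) measurable
    also have "\<dots> = (\<Sum>j<n + k. \<integral>\<^sup>+y. ennreal (pd k \<omega> (resampled_covariate j \<omega>) y) *
        indicator A (fun_upd \<omega> k (resampled_covariate j \<omega>, y)) \<partial>lborel) / of_nat (n + k)"
      by (rule nn_integral_step) measurable
    finally show ?thesis .
  qed
  then show "(\<lambda>\<omega>. emeasure (step_path k \<omega>) A) \<in> borel_measurable path_space"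
    by simp
qed

lemma prob_space_law: "prob_space (lw k)"
proof (induction k)
  case 0
  then show ?case by (simp add: prob_space_return)
next
  case (Suc k)
  have "step_path k \<in> lw k \<rightarrow>\<^sub>M subprob_algebra path_space"
    using measurable_step_path by (simp cong: measurable_cong_sets)
  then show ?case
    unfolding law_Suc using prob_space_step_path by (intro prob_space.prob_space_bind[OF Suc.IH]) auto
qed

lemma nn_integral_law_Suc:
  assumes [measurable]: "g \<in> borel_measurable path_space"
  shows "(\<integral>\<^sup>+w. g w \<partial>lw (Suc k)) = (\<integral>\<^sup>+\<omega>. (\<integral>\<^sup>+z. g (fun_upd \<omega> k z) \<partial>st k \<omega>) \<partial>lw k)"
proof -
  have "step_path k \<in> lw k \<rightarrow>\<^sub>M subprob_algebra path_space"
    using measurable_step_path by (simp cong: measurable_cong_sets)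
  then show ?thesis
    unfolding law_Suc by (simp add: nn_integral_bind[OF assms] nn_integral_step_path)
qed

subsection \<open>The increments of the distribution function form a bounded martingale\<close>

definition pcdf_increment :: "nat \<Rightarrow> (nat \<Rightarrow> (real^'d) \<times> real) \<Rightarrow> real^'d \<Rightarrow> real \<Rightarrow> (real^'d) \<times> real \<Rightarrow> real"
  where "pcdf_increment k \<omega> x0 y0 z = pc (Suc k) (fun_upd \<omega> k z) x0 y0 - pc k \<omega> x0 y0"

abbreviation updated_cdf :: "nat \<Rightarrow> (nat \<Rightarrow> (real^'d) \<times> real) \<Rightarrow> real^'d \<Rightarrow> real \<Rightarrow> real \<Rightarrow> real" where
  "updated_cdf k \<omega> x0 y0 r \<equiv> density_cdf (copula_update \<rho>y 1 r (pd k \<omega> x0)) y0"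

lemma pcdf_increment_eq:
  "pcdf_increment k \<omega> x0 y0 z =
     weight k x0 (fst z) * (updated_cdf k \<omega> x0 y0 (pc k \<omega> (fst z) (snd z)) - pc k \<omega> x0 y0)"
proof -
  define a where "a = weight k x0 (fst z)"
  define q where "q = pc k \<omega> x0 y0"
  define h where "h = updated_cdf k \<omega> x0 y0 (pc k \<omega> (fst z) (snd z))"
  have "pc (Suc k) (fun_upd \<omega> k z) x0 y0 = (1 - a) * q + a * h"
    unfolding a_def q_def h_def by (rule pcdf_Suc_fun_upd)
  then show ?thesis
    unfolding pcdf_increment_def a_def[symmetric] q_def[symmetric] h_def[symmetric]
    by (simp add: algebra_simps)
qed

lemma abs_pcdf_increment_le: "\<bar>pcdf_increment k \<omega> x0 y0 z\<bar> \<le> weight_bound \<rho>x x0 * alpha (n + k + 1)"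
proof -
  have "updated_cdf k \<omega> x0 y0 (pc k \<omega> (fst z) (snd z)) \<in> {0..1}"
    by (rule density_cdf_bounds[OF is_density_copula_update_1[OF is_density_pdens abs_\<rho>y]])
  then have "\<bar>updated_cdf k \<omega> x0 y0 (pc k \<omega> (fst z) (snd z)) - pc k \<omega> x0 y0\<bar> \<le> 1"
    using pcdf_bounds[of k \<omega> x0 y0] by (auto simp: abs_le_iff)
  then have "\<bar>pcdf_increment k \<omega> x0 y0 z\<bar> \<le> weight k x0 (fst z)"
    unfolding pcdf_increment_eq abs_mult using weight_bounds(1)[of k x0 "fst z"]
    by (simp add: mult_left_le)
  then show ?thesis
    using weight_bounds(3)[of k x0 "fst z"] by simp
qed

lemma measurable_pcdf_increment [measurable]: "pcdf_increment k \<omega> x0 y0 \<in> borel_measurable borel"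
  unfolding pcdf_increment_def by measurable

lemma measurable_updated_cdf [measurable (raw)]:
  "g \<in> borel_measurable M \<Longrightarrow> (\<lambda>w. updated_cdf k \<omega> x0 y0 (g w)) \<in> borel_measurable M"
  by (rule borel_measurable_density_cdf_copula_update[OF is_density_pdens])

lemma updated_cdf_bounds: "updated_cdf k \<omega> x0 y0 r \<in> {0..1}"
  by (rule density_cdf_bounds[OF is_density_copula_update_1[OF is_density_pdens abs_\<rho>y]])

text \<open>The weight depends only on the resampled covariate, and for each fixed covariate the update
  preserves the distribution function on average.\<close>

lemma nn_integral_step_updated_cdf:
  "(\<integral>\<^sup>+z. ennreal (weight k x0 (fst z) * updated_cdf k \<omega> x0 y0 (pc k \<omega> (fst z) (snd z))) \<partial>st k \<omega>) =
   (\<integral>\<^sup>+z. ennreal (weight k x0 (fst z) * pc k \<omega> x0 y0) \<partial>st k \<omega>)"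
proof -
  have "(\<integral>\<^sup>+y. ennreal (pd k \<omega> X y) * ennreal (weight k x0 X * updated_cdf k \<omega> x0 y0 (pc k \<omega> X y)) \<partial>lborel) =
      (\<integral>\<^sup>+y. ennreal (pd k \<omega> X y) * ennreal (weight k x0 X * pc k \<omega> x0 y0) \<partial>lborel)" for X
  proof -
    have [measurable]: "pd k \<omega> X \<in> borel_measurable borel"
      using is_densityD(1)[OF is_density_pdens] .
    have "(\<integral>\<^sup>+y. ennreal (pd k \<omega> X y) * ennreal (weight k x0 X * updated_cdf k \<omega> x0 y0 (pc k \<omega> X y)) \<partial>lborel) =
        (\<integral>\<^sup>+y. ennreal (weight k x0 X) * (ennreal (pd k \<omega> X y) * ennreal (updated_cdf k \<omega> x0 y0 (pc k \<omega> X y))) \<partial>lborel)"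
      using weight_bounds(1)[of k x0 X] updated_cdf_bounds
      by (intro nn_integral_cong) (simp add: ennreal_mult ac_simps)
    also have "\<dots> = ennreal (weight k x0 X) *
        (\<integral>\<^sup>+y. ennreal (pd k \<omega> X y) * ennreal (updated_cdf k \<omega> x0 y0 (pc k \<omega> X y)) \<partial>lborel)"
      by (rule nn_integral_cmult) measurable
    also have "\<dots> = ennreal (weight k x0 X) * ennreal (pc k \<omega> x0 y0)"
      unfolding pcdf_eq_density_cdf
      by (simp only: nn_integral_density_cdf_copula_update[OF is_density_pdens is_density_pdens abs_\<rho>y])
    also have "\<dots> = (\<integral>\<^sup>+y. ennreal (pd k \<omega> X y) \<partial>lborel) * ennreal (weight k x0 X * pc k \<omega> x0 y0)"
      using is_densityD(4)[OF is_density_pdens] weight_bounds(1)[of k x0 X] pcdf_bounds[of k \<omega> x0 y0]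
      by (simp add: ennreal_mult)
    also have "\<dots> = (\<integral>\<^sup>+y. ennreal (pd k \<omega> X y) * ennreal (weight k x0 X * pc k \<omega> x0 y0) \<partial>lborel)"
      by (rule nn_integral_multc[symmetric]) measurable
    finally show ?thesis .
  qed
  then show ?thesis
    by (simp add: nn_integral_step)
qed

lemma integral_pcdf_increment_step: "(\<integral>z. pcdf_increment k \<omega> x0 y0 z \<partial>st k \<omega>) = 0"
proof -
  interpret prob_space "st k \<omega>"
    by (rule prob_space_step)
  let ?A = "\<lambda>z. weight k x0 (fst z) * updated_cdf k \<omega> x0 y0 (pc k \<omega> (fst z) (snd z))"
  let ?B = "\<lambda>z::(real^'d) \<times> real. weight k x0 (fst z) * pc k \<omega> x0 y0"
  have "(\<lambda>X. weight k x0 X) \<in> borel_measurable borel"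
    by measurable
  then have ax_meas: "(\<lambda>z::(real^'d) \<times> real. weight k x0 (fst z)) \<in> borel_measurable borel"
    using measurable_compose[OF measurable_fst_borel[where 'a="real^'d" and 'b=real]] by blast
  have "?A \<in> borel_measurable borel"
    by (rule borel_measurable_times[OF ax_meas measurable_updated_cdf[OF measurable_pcdf_point]])
  then have A_meas: "?A \<in> borel_measurable (st k \<omega>)"
    by (simp cong: measurable_cong_sets)
  have "?B \<in> borel_measurable borel"
    by (rule borel_measurable_times[OF ax_meas]) simp
  then have B_meas: "?B \<in> borel_measurable (st k \<omega>)"
    by (simp cong: measurable_cong_sets)
  have A: "0 \<le> ?A z" "?A z \<le> 1" for z
    using updated_cdf_bounds weight_bounds(1,2)[of k x0 "fst z"] by (simp_all add: mult_le_one)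
  have B: "0 \<le> ?B z" "?B z \<le> 1" for z
    using weight_bounds(1,2)[of k x0 "fst z"] pcdf_bounds[of k \<omega> x0 y0] by (simp_all add: mult_le_one)
  have "(\<integral>z. ?A z \<partial>st k \<omega>) = enn2real (\<integral>\<^sup>+z. ennreal (?A z) \<partial>st k \<omega>)"
    by (rule integral_eq_nn_integral[OF A_meas]) (use A(1) in auto)
  also have "\<dots> = enn2real (\<integral>\<^sup>+z. ennreal (?B z) \<partial>st k \<omega>)"
    by (simp only: nn_integral_step_updated_cdf)
  also have "\<dots> = (\<integral>z. ?B z \<partial>st k \<omega>)"
    by (rule integral_eq_nn_integral[OF B_meas, symmetric]) (use B(1) in auto)
  moreover have "integrable (st k \<omega>) ?A"
    by (rule integrable_const_bound[where B=1, OF AE_I2 A_meas]) (metis A abs_of_nonneg real_norm_def)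
  moreover have "integrable (st k \<omega>) ?B"
    by (rule integrable_const_bound[where B=1, OF AE_I2 B_meas]) (metis B abs_of_nonneg real_norm_def)
  ultimately show ?thesis
    unfolding pcdf_increment_eq right_diff_distrib by (simp only: Bochner_Integration.integral_diff)
qed

lemma nn_integral_exp_pcdf_increment_le:
  "(\<integral>\<^sup>+z. ennreal (exp (l * pcdf_increment k \<omega> x0 y0 z)) \<partial>st k \<omega>)
     \<le> ennreal (exp (l\<^sup>2 * (weight_bound \<rho>x x0 * alpha (n + k + 1))\<^sup>2 / 2))"
  by (rule prob_space.Hoeffdings_lemma_nn_integral_symmetric[OF prob_space_step _
        abs_pcdf_increment_le integral_pcdf_increment_step])
     (simp cong: measurable_cong_sets)

text \<open>Azuma's inequality: condition on the first \<open>k0 + m\<close> steps.\<close>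

lemma nn_integral_exp_pcdf_deviation_le:
  "(\<integral>\<^sup>+\<omega>. ennreal (exp (l * (pc (k0 + m) \<omega> x0 y0 - pc k0 \<omega> x0 y0))) \<partial>lw (k0 + m))
     \<le> ennreal (exp (l\<^sup>2 * (\<Sum>i<m. (weight_bound \<rho>x x0 * alpha (n + (k0 + i) + 1))\<^sup>2) / 2))"
proof (induction m)
  case 0
  interpret prob_space "lw k0"
    by (rule prob_space_law)
  show ?case
    by (simp add: emeasure_space_1[simplified])
next
  case (Suc m)
  define k where "k = k0 + m"
  define c where "c = ennreal (exp (l\<^sup>2 * (weight_bound \<rho>x x0 * alpha (n + k + 1))\<^sup>2 / 2))"
  define S where "S \<omega> = pc k \<omega> x0 y0 - pc k0 \<omega> x0 y0" for \<omega>
  have [measurable]: "S \<in> borel_measurable path_space"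
    unfolding S_def by measurable
  have S_Suc: "pc (Suc k) (fun_upd \<omega> k z) x0 y0 - pc k0 (fun_upd \<omega> k z) x0 y0 = S \<omega> + pcdf_increment k \<omega> x0 y0 z"
    for \<omega> z
    unfolding S_def pcdf_increment_def k_def by (simp add: pcdf_fun_upd)
  have exp_meas: "(\<lambda>\<omega>. ennreal (exp (l * (pc (Suc k) \<omega> x0 y0 - pc k0 \<omega> x0 y0)))) \<in> borel_measurable path_space"
    by measurable
  have "(\<integral>\<^sup>+\<omega>. ennreal (exp (l * (pc (Suc k) \<omega> x0 y0 - pc k0 \<omega> x0 y0))) \<partial>lw (Suc k)) =
      (\<integral>\<^sup>+\<omega>. (\<integral>\<^sup>+z. ennreal (exp (l * S \<omega>)) * ennreal (exp (l * pcdf_increment k \<omega> x0 y0 z)) \<partial>st k \<omega>) \<partial>lw k)"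
    unfolding nn_integral_law_Suc[OF exp_meas]
    by (simp add: S_Suc distrib_left exp_add ennreal_mult)
  also have "\<dots> = (\<integral>\<^sup>+\<omega>. ennreal (exp (l * S \<omega>)) *
      (\<integral>\<^sup>+z. ennreal (exp (l * pcdf_increment k \<omega> x0 y0 z)) \<partial>st k \<omega>) \<partial>lw k)"
    by (intro nn_integral_cong nn_integral_cmult) (simp cong: measurable_cong_sets)
  also have "\<dots> \<le> (\<integral>\<^sup>+\<omega>. ennreal (exp (l * S \<omega>)) * c \<partial>lw k)"
    unfolding c_def by (intro nn_integral_mono mult_left_mono nn_integral_exp_pcdf_increment_le) simp
  also have "\<dots> = (\<integral>\<^sup>+\<omega>. ennreal (exp (l * S \<omega>)) \<partial>lw k) * c"
    by (rule nn_integral_multc) (simp cong: measurable_cong_sets)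
  also have "\<dots> \<le> ennreal (exp (l\<^sup>2 * (\<Sum>i<m. (weight_bound \<rho>x x0 * alpha (n + (k0 + i) + 1))\<^sup>2) / 2)) * c"
    using Suc.IH unfolding S_def k_def by (intro mult_right_mono) auto
  also have "\<dots> = ennreal (exp (l\<^sup>2 * (\<Sum>i<Suc m. (weight_bound \<rho>x x0 * alpha (n + (k0 + i) + 1))\<^sup>2) / 2))"
    unfolding c_def k_def
    by (simp add: add_divide_distrib distrib_left exp_add ennreal_mult[symmetric] add.assoc)
  finally show ?case
    unfolding k_def by simp
qed

lemma pcdf_deviation_tail:
  assumes "n \<le> N" "N < M" "\<epsilon> \<ge> 0"
  shows "measure (lw (M - n)) {\<omega> \<in> space path_space. \<bar>pc (M - n) \<omega> x0 y0 - pc (N - n) \<omega> x0 y0\<bar> \<ge> \<epsilon>}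
    \<le> 2 * exp (- \<epsilon>\<^sup>2 / (2 * ((weight_bound \<rho>x x0)\<^sup>2 * (\<Sum>i = N + 1..M. (alpha i)\<^sup>2))))"
proof -
  define V where "V = (weight_bound \<rho>x x0)\<^sup>2 * (\<Sum>i = N + 1..M. (alpha i)\<^sup>2)"
  define k0 where "k0 = N - n"
  define m where "m = M - N"
  have M: "M - n = k0 + m"
    using assms unfolding k0_def m_def by simp
  have "(\<Sum>i<m. (weight_bound \<rho>x x0 * alpha (n + (k0 + i) + 1))\<^sup>2) =
      (weight_bound \<rho>x x0)\<^sup>2 * (\<Sum>i<m. (alpha (i + (N + 1)))\<^sup>2)"
    using assms unfolding k0_def by (simp add: sum_distrib_left power_mult_distrib ac_simps)
  also have "(\<Sum>i<m. (alpha (i + (N + 1)))\<^sup>2) = (\<Sum>i = 0 + (N + 1)..<m + (N + 1). (alpha i)\<^sup>2)"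
    unfolding sum.shift_bounds_nat_ivl atLeast0LessThan ..
  also have "{0 + (N + 1)..<m + (N + 1)} = {N + 1..M}"
    using assms unfolding m_def by auto
  finally have V_eq: "(\<Sum>i<m. (weight_bound \<rho>x x0 * alpha (n + (k0 + i) + 1))\<^sup>2) = V"
    by (simp add: V_def)
  have "V > 0"
    unfolding V_def using weight_bound_pos[of \<rho>x x0] \<rho>x sum_alpha_squared_pos[OF \<open>N < M\<close>] by simp
  interpret prob_space "lw (k0 + m)"
    by (rule prob_space_law)
  have mgf: "(\<integral>\<^sup>+\<omega>. ennreal (exp (l * (pc (k0 + m) \<omega> x0 y0 - pc k0 \<omega> x0 y0))) \<partial>lw (k0 + m))
      \<le> ennreal (exp (l\<^sup>2 * V / 2))" for l
    using nn_integral_exp_pcdf_deviation_le[of k0 m l x0 y0] unfolding V_eq .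
  have "prob {\<omega> \<in> space (lw (k0 + m)). \<bar>pc (k0 + m) \<omega> x0 y0 - pc k0 \<omega> x0 y0\<bar> \<ge> \<epsilon>} \<le> 2 * exp (- \<epsilon>\<^sup>2 / (2 * V))"
    by (rule prob_abs_ge_le_of_mgf[OF _ \<open>V > 0\<close> \<open>\<epsilon> \<ge> 0\<close> mgf]) measurable
  then show ?thesis
    unfolding M V_def k0_def by simp
qed

end

context predictive_resampling
begin

subsection \<open>Reduction to jointly measurable initial densities\<close>

abbreviation observed :: "(real^'d) set" where
  "observed \<equiv> xs ` {..<n}"

text \<open>Resampled covariates only ever take observed values, so \<open>p0\<close> matters only there and at
  the point \<open>x\<close> of interest.  Replacing it by \<open>p0 x\<close> everywhere else makes it jointly
  measurable without changing anything on the paths that occur.\<close>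

definition p0_on_sample :: "real^'d \<Rightarrow> real^'d \<Rightarrow> real \<Rightarrow> real" where
  "p0_on_sample x x' = (if x' \<in> insert x observed then p0 x' else p0 x)"

lemma predictive_resampling_measurable_p0_on_sample:
  "predictive_resampling_measurable (p0_on_sample x) \<rho>y \<rho>x n"
proof
  show "is_density (p0_on_sample x x')" for x'
    using is_density_p0 by (simp add: p0_on_sample_def)
  have [measurable]: "p0 s \<in> borel_measurable borel" for s
    using is_densityD(1)[OF is_density_p0] .
  have [measurable]: "- insert x observed \<in> sets borel"
    by (intro borel_comp borel_closed finite_imp_closed) simp
  have "p0_on_sample x (fst z) (snd z) = (\<Sum>s\<in>insert x observed. indicator {s} (fst z) * p0 s (snd z))
      + indicator (- insert x observed) (fst z) * p0 x (snd z)" for z :: "(real^'d) \<times> real"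
  proof (cases "fst z \<in> insert x observed")
    case True
    have "(\<Sum>s\<in>insert x observed. indicator {s} (fst z) * p0 s (snd z)) =
        (\<Sum>s\<in>insert x observed. if fst z = s then p0 s (snd z) else 0)"
      by (intro sum.cong refl) (simp split: split_indicator)
    also have "\<dots> = p0 (fst z) (snd z)"
      using True by (simp add: sum.delta)
    finally show ?thesis
      using True by (simp add: p0_on_sample_def)
  next
    case False
    then have "(\<Sum>s\<in>insert x observed. indicator {s} (fst z) * p0 s (snd z)) = 0"
      by (intro sum.neutral) (auto split: split_indicator)
    then show ?thesis
      using False by (simp add: p0_on_sample_def)
  qed
  then show "(\<lambda>z. p0_on_sample x (fst z) (snd z)) \<in> borel_measurable (borel \<Otimes>\<^sub>M borel)"
    by (simp only:) measurable
qed (use \<rho>y \<rho>x n_pos in auto)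

lemma pdens_p0_on_sample:
  assumes "\<forall>j<k. fst (\<omega> j) \<in> insert x observed" "x' \<in> insert x observed"
  shows "pdens (p0_on_sample x) \<rho>y \<rho>x n k \<omega> x' = pd k \<omega> x'"
  using assms
proof (induction k arbitrary: x')
  case 0
  then show ?case by (simp add: p0_on_sample_def fun_eq_iff)
next
  case (Suc k)
  then show ?case
    by (simp add: Let_def)
qed

lemma pcdf_p0_on_sample:
  "\<forall>j<k. fst (\<omega> j) \<in> insert x observed \<Longrightarrow> x' \<in> insert x observed \<Longrightarrow>
    pcdf (p0_on_sample x) \<rho>y \<rho>x n k \<omega> x' y = pc k \<omega> x' y"
  unfolding pcdf_def by (simp add: pdens_p0_on_sample)

lemma step_p0_on_sample:
  assumes "\<forall>j<k. fst (\<omega> j) \<in> observed"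
  shows "step (p0_on_sample x) \<rho>y \<rho>x n xs k \<omega> = st k \<omega>"
  unfolding step_def
proof (intro bind_cong refl)
  fix j assume "j \<in> space (uniform_count_measure {..<n + k})"
  then have "(if j < n then xs j else fst (\<omega> (j - n))) \<in> insert x observed"
    using assms by (auto simp: space_uniform_count_measure)
  moreover have "\<forall>j<k. fst (\<omega> j) \<in> insert x observed"
    using assms by auto
  ultimately show "(let X = if j < n then xs j else fst (\<omega> (j - n))
      in distr (density lborel (\<lambda>y. ennreal (pdens (p0_on_sample x) \<rho>y \<rho>x n k \<omega> X y))) borel (\<lambda>y. (X, y))) =
    (let X = if j < n then xs j else fst (\<omega> (j - n))
      in distr (density lborel (\<lambda>y. ennreal (pd k \<omega> X y))) borel (\<lambda>y. (X, y)))"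
    by (simp add: Let_def pdens_p0_on_sample)
qed

definition leaves_sample :: "nat \<Rightarrow> (nat \<Rightarrow> (real^'d) \<times> real) set" where
  "leaves_sample k = {\<omega>. \<exists>j<k. fst (\<omega> j) \<notin> observed}"

lemma sets_leaves_sample [measurable]: "leaves_sample k \<in> sets path_space"
proof -
  have [measurable]: "observed \<in> sets borel"
    by (intro borel_closed finite_imp_closed) simp
  have "leaves_sample k = {\<omega> \<in> space path_space. \<exists>j\<in>{..<k}. fst (\<omega> j) \<notin> observed}"
    by (auto simp: leaves_sample_def)
  also have "\<dots> \<in> sets path_space"
    by measurable
  finally show ?thesis .
qed

lemma emeasure_leaves_sample: "emeasure (law (p0_on_sample x) \<rho>y \<rho>x n xs k) (leaves_sample k) = 0"
proof (induction k)
  case 0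
  then show ?case by (simp add: leaves_sample_def)
next
  case (Suc k)
  interpret M: predictive_resampling_measurable "p0_on_sample x" \<rho>y \<rho>x n xs
    by (rule predictive_resampling_measurable_p0_on_sample)
  have "(\<integral>\<^sup>+z. indicator (leaves_sample (Suc k)) (fun_upd \<omega> k z) \<partial>M.st k \<omega>) = 0"
    if "\<omega> \<notin> leaves_sample k" for \<omega>
  proof -
    have "M.resampled_covariate j \<omega> \<in> observed" if "j < n + k" for j
      using that \<open>\<omega> \<notin> leaves_sample k\<close> by (auto simp: M.resampled_covariate_def leaves_sample_def)
    then have "indicator (leaves_sample (Suc k)) (fun_upd \<omega> k (M.resampled_covariate j \<omega>, y)) = (0::ennreal)"
      if "j < n + k" for j y
      using that \<open>\<omega> \<notin> leaves_sample k\<close> by (auto simp: leaves_sample_def less_Suc_eq)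
    then show ?thesis
      by (simp add: M.nn_integral_step)
  qed
  then have "AE \<omega> in M.lw k. (\<integral>\<^sup>+z. indicator (leaves_sample (Suc k)) (fun_upd \<omega> k z) \<partial>M.st k \<omega>) = 0"
    using Suc.IH by (intro AE_I'[of "leaves_sample k"]) (auto simp: null_sets_def)
  then have "(\<integral>\<^sup>+\<omega>. (\<integral>\<^sup>+z. indicator (leaves_sample (Suc k)) (fun_upd \<omega> k z) \<partial>M.st k \<omega>) \<partial>M.lw k) = 0"
    by (simp add: nn_integral_cong_AE)
  moreover have "emeasure (M.lw (Suc k)) (leaves_sample (Suc k)) =
      (\<integral>\<^sup>+w. indicator (leaves_sample (Suc k)) w \<partial>M.lw (Suc k))"
    by (rule nn_integral_indicator[symmetric]) simp
  moreover have "\<dots> = (\<integral>\<^sup>+\<omega>. (\<integral>\<^sup>+z. indicator (leaves_sample (Suc k)) (fun_upd \<omega> k z) \<partial>M.st k \<omega>) \<partial>M.lw k)"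
    by (rule M.nn_integral_law_Suc) measurable
  ultimately show ?case
    by simp
qed

text \<open>When \<open>p0\<close> is not jointly measurable, the kernels defining \<^const>\<open>law\<close> need not be
  measurable either; \<^const>\<open>bind\<close> still returns a measure, which is then either the expected one
  or the null measure (for which the tail bound is trivial).\<close>

lemma law_eq_or_null: "lw k = law (p0_on_sample x) \<rho>y \<rho>x n xs k \<or> (\<forall>A. emeasure (lw k) A = 0)"
proof (induction k)
  case (Suc k)
  interpret M: predictive_resampling_measurable "p0_on_sample x" \<rho>y \<rho>x n xs
    by (rule predictive_resampling_measurable_p0_on_sample)
  from Suc.IH show ?case
  proof
    assume eq: "lw k = M.lw k"
    have "bind (M.lw k) (step_path k) = bind (M.lw k) (M.step_path k) \<or>
        (\<forall>A. emeasure (bind (M.lw k) (step_path k)) A = 0)"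
    proof (rule bind_AE_eq_or_null[OF M.prob_space_law])
      show "M.step_path k \<in> M.lw k \<rightarrow>\<^sub>M subprob_algebra path_space"
        using M.measurable_step_path by (simp cong: measurable_cong_sets)
      show "leaves_sample k \<in> null_sets (M.lw k)"
        using emeasure_leaves_sample by (simp add: null_sets_def)
      show "step_path k \<omega> = M.step_path k \<omega>" if "\<omega> \<in> space (M.lw k) - leaves_sample k" for \<omega>
        using that by (simp add: step_path_def M.step_path_def step_p0_on_sample leaves_sample_def)
      show "step_path k \<omega> \<in> space (subprob_algebra path_space)" for \<omega>
        using prob_space_step_path
        by (simp add: space_subprob_algebra prob_space_imp_subprob_space step_path_def)
    qed
    then show ?case
      unfolding law_Suc M.law_Suc eq by blast
  next
    assume "\<forall>A. emeasure (lw k) A = 0"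
    then show ?case
      unfolding law_Suc by (auto intro: emeasure_bind_null)
  qed
qed simp

lemma pcdf_deviation_tail_bound:
  assumes "n \<le> N" "N < M" "\<epsilon> \<ge> 0"
  shows "measure (lw (M - n)) {\<omega> \<in> space path_space. \<bar>pc (M - n) \<omega> x y - pc (N - n) \<omega> x y\<bar> \<ge> \<epsilon>}
    \<le> 2 * exp (- \<epsilon>\<^sup>2 / (2 * ((weight_bound \<rho>x x)\<^sup>2 * (\<Sum>i = N + 1..M. (alpha i)\<^sup>2))))"
    (is "measure _ ?E \<le> ?R")
proof -
  interpret M: predictive_resampling_measurable "p0_on_sample x" \<rho>y \<rho>x n xs
    by (rule predictive_resampling_measurable_p0_on_sample)
  let ?E' = "{\<omega> \<in> space path_space. \<bar>M.pc (M - n) \<omega> x y - M.pc (N - n) \<omega> x y\<bar> \<ge> \<epsilon>}"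
  from law_eq_or_null[of "M - n" x] show ?thesis
  proof
    assume eq: "lw (M - n) = M.lw (M - n)"
    interpret prob_space "M.lw (M - n)"
      by (rule M.prob_space_law)
    have "?E \<subseteq> ?E' \<union> leaves_sample (M - n)"
      using assms by (auto simp: leaves_sample_def pcdf_p0_on_sample)
    then have "measure (M.lw (M - n)) ?E \<le> measure (M.lw (M - n)) (?E' \<union> leaves_sample (M - n))"
      by (intro finite_measure_mono) measurable
    also have "\<dots> \<le> measure (M.lw (M - n)) ?E' + measure (M.lw (M - n)) (leaves_sample (M - n))"
      by (intro measure_Un_le) measurable
    also have "\<dots> \<le> ?R"
      using M.pcdf_deviation_tail[OF assms] emeasure_leaves_sample by (simp add: measure_def)
    finally show ?thesis
      unfolding eq .
  next
    assume "\<forall>A. emeasure (lw (M - n)) A = 0"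
    then show ?thesis
      by (simp add: measure_def)
  qed
qed

end

lemma gaussian_tail_le_bernstein_tail:
  fixes \<epsilon> C a V :: real
  assumes "\<epsilon> \<ge> 0" "C > 0" "a > 0" "V > 0"
  shows "exp (- \<epsilon>\<^sup>2 / (2 * (C\<^sup>2 * V))) \<le> exp (- \<epsilon>\<^sup>2 / (4 * \<epsilon> * C * a / 3 + 2 * C\<^sup>2 * V))"
proof -
  have pos: "2 * (C\<^sup>2 * V) > 0" and le: "2 * (C\<^sup>2 * V) \<le> 4 * \<epsilon> * C * a / 3 + 2 * C\<^sup>2 * V"
    using assms by simp_all
  have "\<epsilon>\<^sup>2 / (4 * \<epsilon> * C * a / 3 + 2 * C\<^sup>2 * V) \<le> \<epsilon>\<^sup>2 / (2 * (C\<^sup>2 * V))"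
  proof (rule divide_left_mono)
    have "4 * \<epsilon> * C * a / 3 + 2 * C\<^sup>2 * V > 0"
      using pos le by linarith
    then show "0 < (4 * \<epsilon> * C * a / 3 + 2 * C\<^sup>2 * V) * (2 * (C\<^sup>2 * V))"
      using pos by (rule mult_pos_pos)
  qed (use le in simp_all)
  then show ?thesis
    by simp
qed

theorem proposition2:
  fixes \<rho>y :: real and \<rho>x :: "'d::finite \<Rightarrow> real" and x :: "real^'d"
  assumes "0 < \<rho>y" "\<rho>y < 1" "\<And>j. 0 < \<rho>x j \<and> \<rho>x j < 1"
  shows "\<exists>C::real. C > 0 \<and>
    (\<forall>(n::nat) (xs :: nat \<Rightarrow> real^'d) (p0 :: real^'d \<Rightarrow> real \<Rightarrow> real).
       n \<ge> 1 \<and>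
       (\<forall>x'. p0 x' \<in> borel_measurable lborel \<and> (\<forall>t. p0 x' t \<ge> 0)
              \<and> integrable lborel (p0 x') \<and> (LINT t|lborel. p0 x' t) = 1)
       \<longrightarrow> (\<forall>M N (\<epsilon>::real) (y::real). n \<le> N \<and> N < M \<and> \<epsilon> \<ge> 0 \<longrightarrow>
             measure (law p0 \<rho>y \<rho>x n xs (M - n))
               {\<omega> \<in> space path_space.
                  \<bar>pcdf p0 \<rho>y \<rho>x n (M - n) \<omega> x y - pcdf p0 \<rho>y \<rho>x n (N - n) \<omega> x y\<bar> \<ge> \<epsilon>}
             \<le> 2 * exp (- \<epsilon>\<^sup>2 / (4 * \<epsilon> * C * alpha (N + 1) / 3
                                 + 2 * C\<^sup>2 * (\<Sum>i = N + 1..M. (alpha i)\<^sup>2)))))"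
proof (intro exI[of _ "weight_bound \<rho>x x"] conjI allI impI)
  show C: "weight_bound \<rho>x x > 0"
    using weight_bound_pos[of \<rho>x x] assms(3) by simp
  fix n :: nat and xs :: "nat \<Rightarrow> real^'d" and p0 :: "real^'d \<Rightarrow> real \<Rightarrow> real"
    and M N :: nat and \<epsilon> y :: real
  assume "n \<ge> 1 \<and> (\<forall>x'. p0 x' \<in> borel_measurable lborel \<and> (\<forall>t. p0 x' t \<ge> 0)
    \<and> integrable lborel (p0 x') \<and> (LINT t|lborel. p0 x' t) = 1)"
  then interpret predictive_resampling p0 \<rho>y \<rho>x n xs
    using assms by unfold_locales (auto simp: is_density_def)
  assume NM: "n \<le> N \<and> N < M \<and> \<epsilon> \<ge> 0"
  then have "measure (lw (M - n)) {\<omega> \<in> space path_space. \<bar>pc (M - n) \<omega> x y - pc (N - n) \<omega> x y\<bar> \<ge> \<epsilon>}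
      \<le> 2 * exp (- \<epsilon>\<^sup>2 / (2 * ((weight_bound \<rho>x x)\<^sup>2 * (\<Sum>i = N + 1..M. (alpha i)\<^sup>2))))"
    by (intro pcdf_deviation_tail_bound) auto
  also have "\<dots> \<le> 2 * exp (- \<epsilon>\<^sup>2 / (4 * \<epsilon> * weight_bound \<rho>x x * alpha (N + 1) / 3
      + 2 * (weight_bound \<rho>x x)\<^sup>2 * (\<Sum>i = N + 1..M. (alpha i)\<^sup>2)))"
    using gaussian_tail_le_bernstein_tail[OF _ C alpha_pos sum_alpha_squared_pos] NM by simp
  finally show "measure (lw (M - n)) {\<omega> \<in> space path_space. \<bar>pc (M - n) \<omega> x y - pc (N - n) \<omega> x y\<bar> \<ge> \<epsilon>}
      \<le> 2 * exp (- \<epsilon>\<^sup>2 / (4 * \<epsilon> * weight_bound \<rho>x x * alpha (N + 1) / 3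
      + 2 * (weight_bound \<rho>x x)\<^sup>2 * (\<Sum>i = N + 1..M. (alpha i)\<^sup>2)))" .
qed

end
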